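(* Assume the setting in the context (deterministic $\Phi$ with $\operatorname{rank}(\widehat\Phi_1)=k$). Then, for both the spectral and Frobenius norm, $$\|\sin\angle(\mathcal R(Q),\mathcal R(U_k))\|_{2,F}\le\frac{\delta_k^{2q+1}\|\widehat\Phi_2\widehat\Phi_1^\dagger\|_2\,\|\Sigma_\perp\|_{2,F}}{\sigma_k\sqrt{1+\gamma^{4q+4}\|\widehat\Phi_2\widehat\Phi_1^\dagger\|_2^2}},$$ $$\|\sin\angle(\mathcal R(P),\mathcal R(V_k))\|_{2,F}\le\frac{\delta_k^{2q}\|\widehat\Phi_2\widehat\Phi_1^\dagger\|_2\,\|\Sigma_\perp\|_{2,F}}{\sigma_k\sqrt{1+\gamma^{4q+2}\|\widehat\Phi_2\widehat\Phi_1^\dagger\|_2^2}}.$$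
   Context: Let $A\in\mathbb R^{m\times n}$ with $m\ge n$ have full SVD $A=U\Sigma V^T$, with singular values $\sigma_1\ge\sigma_2\ge\dots\ge\sigma_n\ge 0$. Fix an integer $k\ge1$ with $\sigma_k>0$ (the paper regards $A$ as having numerical rank $k$, i.e. $\sigma_k$ well separated from $\sigma_{k+1}$). Write $U=[U_k\ U_\perp]$ with $U_k\in\mathbb R^{m\times k}$ the first $k$ left singular vectors $u_1,\dots,u_k$, $U_\perp\in\mathbb R^{m\times(m-k)}$ the rest; $V=[V_k\ V_\perp]$ with $V_k\in\mathbb R^{n\times k}$ the first $k$ right singular vectors $v_1,\dots,v_k$; $\Sigma_k=\mathrm{diag}(\sigma_1,\dots,\sigma_k)$ and $\Sigma_\perp$ the remaining diagonal block of $\Sigma$ containing $\sigma_{k+1},\dots,\sigma_n$ (so $\|\Sigma_\perp\|_2=\sigma_{k+1}$, $\|\Sigma_\perp\|_F=(\sum_{i>k}\sigma_i^2)^{1/2}$). The notation $\|\cdot\|_{2,F}$ means the statement holds for both the spectral and Frobenius norm. Let $p\ge1$ be an oversampling integer, $d=k+p<n$, and $q\ge0$ an integer (power-iteration parameter). RU-QLP (Randomized Unpivoted QLP): given $\Phi\in\mathbb R^{m\times d}$, let $\bar P\in\mathbb R^{n\times d}$ have orthonormal columns spanning the range of $(A^TA)^qA^T\Phi$ (assumed of rank $d$); compute the thin unpivoted QR factorization $A\bar P=QR$ with $Q\in\mathbb R^{m\times d}$ having orthonormal columns and $R\in\mathbb R^{d\times d}$ upper triangular; compute the thin unpivoted QR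 factorization $R^T=\widetilde P\widetilde R$; set $P=\bar P\widetilde P\in\mathbb R^{n\times d}$ and $L=\widetilde R^T$ (lower triangular), giving $\hat A=QLP^T$. Partition $R=\begin{bmatrix}R_{11}&R_{12}\\0&R_{22}\end{bmatrix}$ and $L=\begin{bmatrix}L_{11}&0\\L_{21}&L_{22}\end{bmatrix}$ with $R_{11},L_{11}\in\mathbb R^{k\times k}$. Define $\widehat\Phi_1=U_k^T\Phi\in\mathbb R^{k\times d}$ and $\widehat\Phi_2=U_\perp^T\Phi\in\mathbb R^{(m-k)\times d}$, assume $\widehat\Phi_1$ has rank $k$, and let $\dagger$ denote the Moore–Penrose inverse. Set $\delta_i=\sigma_{k+1}/\sigma_i$ for $i=1,\dots,k$ and $\gamma=\sigma_n/\sigma_1$. Principal angles between a subspace $\mathcal X$ and a $k$-dimensional subspace $\mathcal Y$ (with $\dim\mathcal X\ge k$) are the $k$ canonical angles $0\le\alpha_1\le\dots\le\alpha_k\le\pi/2$; for orthonormal bases $X$, $Y$, the values $\sin\alpha_i$ are the singular values of $(I-XX^T)Y$. $\sin\angle(\mathcal X,\mathcal Y)$ denotes the $k\times k$ diagonal matrix $\mathrm{diag}(\sin\alpha_1,\dots,\sin\alpha_k)$. *)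

theory Defs
  imports "HOL-Analysis.Analysis" "Jordan_Normal_Form.Matrix" "Jordan_Normal_Form.DL_Rank"
begin

definition vnorm :: "real vec \<Rightarrow> real" where
  "vnorm x = sqrt (x \<bullet> x)"

definition norm2 :: "real mat \<Rightarrow> real" where
  "norm2 M = Sup {vnorm (M *\<^sub>v x) | x. x \<in> carrier_vec (dim_col M) \<and> vnorm x = 1}"

definition normF :: "real mat \<Rightarrow> real" where
  "normF M = sqrt (\<Sum>i<dim_row M. \<Sum>j<dim_col M. (M $$ (i,j))\<^sup>2)"

definition pinv :: "real mat \<Rightarrow> real mat" where
  "pinv M = (THE X. X \<in> carrier_mat (dim_col M) (dim_row M) \<and>
              M * X * M = M \<and> X * M * X = X \<and>
              (M * X)\<^sup>T = M * X \<and> (X * M)\<^sup>T = X * M)"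

definition mat_range :: "real mat \<Rightarrow> real vec set" where
  "mat_range M = {M *\<^sub>v x | x. x \<in> carrier_vec (dim_col M)}"

definition orthonormal_cols :: "real mat \<Rightarrow> bool" where
  "orthonormal_cols M \<longleftrightarrow> M\<^sup>T * M = 1\<^sub>m (dim_col M)"

definition lower_triangular :: "real mat \<Rightarrow> bool" where
  "lower_triangular A \<longleftrightarrow> (\<forall>i < dim_row A. \<forall>j < dim_col A. i < j \<longrightarrow> A $$ (i,j) = 0)"

abbreviation mrank :: "nat \<Rightarrow> real mat \<Rightarrow> nat" where
  "mrank nr M \<equiv> vec_space.rank nr M"

(* Given orthonormal bases X (of the subspace range X) and Y (of a k-dimensional subspace),
   the sines of the principal angles are the singular values of (I - X X^T) Y.
   sin_angle_mat X Y is that matrix; its spectral/Frobenius norm equals the spectral/Frobenius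
   norm of diag(sin alpha_1,...,sin alpha_k). *)
definition sin_angle_mat :: "real mat \<Rightarrow> real mat \<Rightarrow> real mat" where
  "sin_angle_mat X Y = (1\<^sub>m (dim_row X) - X * X\<^sup>T) * Y"

definition first_cols :: "nat \<Rightarrow> real mat \<Rightarrow> real mat" where
  "first_cols k M = mat (dim_row M) k (\<lambda>(i,j). M $$ (i,j))"
definition rest_cols :: "nat \<Rightarrow> real mat \<Rightarrow> real mat" where
  "rest_cols k M = mat (dim_row M) (dim_col M - k) (\<lambda>(i,j). M $$ (i,j+k))"

end

theory Submission
  imports Defs
begin

(* Write \<Psi> = U\<^sup>T \<Phi>; its two blocks are \<Phi>1 = Uk\<^sup>T \<Phi> and \<Phi>2. By the SVD the sketch
   (A\<^sup>T A)^q A\<^sup>T \<Phi> equals V \<Sigma>^(2q+1) \<Psi> and A (A\<^sup>T A)^q A\<^sup>T \<Phi> equals U \<Sigma>^(2q+2) \<Psi>. The range of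
   the former is R(Pbar) = R(P), and R(Q) contains the range of the latter. Feeding in
   z = pinv \<Phi>1 \<Sigma>k^(-a) x shows that these ranges contain the graph {W [x; H x]} of
   H = \<Sigma>perp^a \<Phi>2 pinv \<Phi>1 \<Sigma>k^(-a), for (W, a) = (V, 2q+1) and (U, 2q+2) respectively.

   If a subspace contains such a graph, comparing W [x; 0] with its points W [y; H y] gives
   |sin x|^2 \<le> |x - y|^2 + |H y|^2 for the projection "sin" of the principal angles. Taking
   y = x / (1 + T^2) gives |sin|_2^2 \<le> T^2 / (1 + T^2) whenever |H|_2 \<le> T; taking
   y = (I + H\<^sup>T H)^(-1) x and summing over a basis gives |sin|_F^2 \<le> \<Sum>j |h_j|^2 / (1 + |h_j|^2) over
   the rows h_j of H. Row j of H has norm at most (\<sigma>(k+j+1) / \<sigma>k)^a |\<Phi>2 pinv \<Phi>1|_2, and since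
   t / (1 + t) increases and \<sigma>n / \<sigma>1 \<le> \<sigma>(k+j+1) / \<sigma>k, every term is bounded with the common
   denominator 1 + (\<sigma>n / \<sigma>1)^(2a) |\<Phi>2 pinv \<Phi>1|_2^2. *)

no_notation inner (infix "\<bullet>" 70)
no_notation vec_nth (infixl "$" 90)

lemma scalar_prod_self: "(x::real vec) \<bullet> x = (\<Sum>i<dim_vec x. (x$i)^2)"
  unfolding scalar_prod_def by (simp add: atLeast0LessThan power2_eq_square)

lemma scalar_prod_self_nonneg: "0 \<le> (x::real vec) \<bullet> x"
  using conjugate_square_ge_0_vec[of x] by simp

lemma scalar_prod_self_eq_0_iff: "(x::real vec) \<in> carrier_vec n \<Longrightarrow> x \<bullet> x = 0 \<longleftrightarrow> x = 0\<^sub>v n"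
  using conjugate_square_eq_0_vec[of x n] by simp

lemma cauchy_schwarz_scalar_prod:
  assumes "dim_vec x = dim_vec (y::real vec)"
  shows "(x \<bullet> y)^2 \<le> (x \<bullet> x) * (y \<bullet> y)"
  using Cauchy_Schwarz_ineq_sum[of "\<lambda>i. x$i" "\<lambda>i. y$i" "{..<dim_vec y}"] assms
  unfolding scalar_prod_def by (simp add: atLeast0LessThan power2_eq_square)

lemma vnorm_nonneg: "0 \<le> vnorm x"
  unfolding vnorm_def by (simp add: scalar_prod_self_nonneg)

lemma vnorm_power2: "(vnorm x)^2 = x \<bullet> x"
  unfolding vnorm_def using scalar_prod_self_nonneg by simp

lemma vnorm_le_iff: "vnorm x \<le> vnorm y \<longleftrightarrow> x \<bullet> x \<le> y \<bullet> y"
  unfolding vnorm_def by simp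

lemma vnorm_leI: "0 \<le> c \<Longrightarrow> x \<bullet> x \<le> c^2 \<Longrightarrow> vnorm x \<le> c"
  unfolding vnorm_def using scalar_prod_self_nonneg real_le_lsqrt by blast

lemma vnorm_smult: "vnorm (c \<cdot>\<^sub>v x) = \<bar>c\<bar> * vnorm x"
proof -
  have "(c \<cdot>\<^sub>v x) \<bullet> (c \<cdot>\<^sub>v x) = c^2 * (x \<bullet> x)"
    unfolding scalar_prod_self by (simp add: sum_distrib_left power_mult_distrib)
  thus ?thesis unfolding vnorm_def by (simp add: real_sqrt_mult)
qed

lemma abs_index_le_vnorm:
  assumes "i < dim_vec x"
  shows "\<bar>x $ i\<bar> \<le> vnorm x"
proof -
  have "(x $ i)^2 \<le> x \<bullet> x"
    unfolding scalar_prod_self using assms by (intro member_le_sum) auto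
  thus ?thesis unfolding vnorm_def by (simp add: real_le_rsqrt)
qed

lemma vnorm_unit_vec: "i < n \<Longrightarrow> vnorm (unit_vec n i) = 1"
  unfolding vnorm_def by simp

lemma vnorm_scale_le:
  fixes v :: "real vec"
  assumes v: "v \<in> carrier_vec n'" and "n \<le> n'" and B: "0 \<le> B" "\<And>i. i < n \<Longrightarrow> \<bar>f i\<bar> \<le> B"
  shows "vnorm (vec n (\<lambda>i. f i * v $ i)) \<le> B * vnorm v"
proof -
  have "(f i)^2 \<le> B^2" if "i < n" for i
    using B that by (metis abs_le_square_iff abs_of_nonneg)
  hence "(\<Sum>i<n. (f i * v $ i)^2) \<le> (\<Sum>i<n. B^2 * (v $ i)^2)"
    by (intro sum_mono) (auto simp: power_mult_distrib intro: mult_right_mono)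
  also have "\<dots> \<le> (\<Sum>i<n'. B^2 * (v $ i)^2)"
    using \<open>n \<le> n'\<close> by (intro sum_mono2) auto
  finally show ?thesis
    using v B(1) vnorm_nonneg[of v]
    by (intro vnorm_leI) (simp_all add: scalar_prod_self power_mult_distrib vnorm_power2 sum_distrib_left)
qed

lemma orthonormal_cols_cancel:
  assumes "W \<in> carrier_mat N M" "W\<^sup>T * W = 1\<^sub>m M" "(x::real vec) \<in> carrier_vec M"
  shows "W\<^sup>T *\<^sub>v (W *\<^sub>v x) = x"
  using assms by (simp flip: assoc_mult_mat_vec[of _ M N _ M])

lemma orthonormal_cols_scalar_prod:
  assumes W: "W \<in> carrier_mat N M" "W\<^sup>T * W = 1\<^sub>m M" and x: "(x::real vec) \<in> carrier_vec M"
  shows "(W *\<^sub>v x) \<bullet> (W *\<^sub>v x) = x \<bullet> x"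
  using transpose_vec_mult_scalar[OF W(1) x, of "W *\<^sub>v x"] orthonormal_cols_cancel[OF W x] W x
  by simp

lemma orthonormal_cols_mult:
  assumes A: "A \<in> carrier_mat N r" "orthonormal_cols A" and B: "B \<in> carrier_mat r c" "orthonormal_cols B"
  shows "orthonormal_cols (A * B)"
proof -
  have "(A * B)\<^sup>T * (A * B) = B\<^sup>T * ((A\<^sup>T * A) * B)"
    using A(1) B(1) by (simp add: transpose_mult[of _ N r _ c] assoc_mult_mat[of _ c N _ N _ c]
        assoc_mult_mat[of _ c r _ N _ c] assoc_mult_mat[of _ r N _ N _ c])
  thus ?thesis using A B unfolding orthonormal_cols_def by simp
qed

lemma quadratic_form_gram:
  assumes "H \<in> carrier_mat c k" "(y::real vec) \<in> carrier_vec k"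
  shows "((H\<^sup>T * H) *\<^sub>v y) \<bullet> y = (H *\<^sub>v y) \<bullet> (H *\<^sub>v y)"
  using transpose_vec_mult_scalar[OF assms, of "H *\<^sub>v y"] assms
  by (simp add: assoc_mult_mat_vec[of _ k c _ k])

lemma normF_power2: "(normF M)^2 = (\<Sum>i<dim_row M. \<Sum>j<dim_col M. (M $$ (i,j))^2)"
  unfolding normF_def by (subst real_sqrt_pow2) (auto intro!: sum_nonneg)

lemma normF_nonneg: "0 \<le> normF M"
  unfolding normF_def by (intro real_sqrt_ge_zero sum_nonneg) auto

lemma vnorm_mult_le_normF:
  assumes M: "M \<in> carrier_mat a b" and x: "(x::real vec) \<in> carrier_vec b"
  shows "vnorm (M *\<^sub>v x) \<le> normF M * vnorm x"
proof -
  have "(M *\<^sub>v x) \<bullet> (M *\<^sub>v x) = (\<Sum>i<a. (row M i \<bullet> x)^2)"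
    using M unfolding scalar_prod_self by simp
  also have "\<dots> \<le> (\<Sum>i<a. (row M i \<bullet> row M i) * (x \<bullet> x))"
    using M x by (intro sum_mono cauchy_schwarz_scalar_prod) auto
  also have "\<dots> = (normF M * vnorm x)^2"
    using M unfolding normF_power2 power_mult_distrib vnorm_power2
    by (simp add: sum_distrib_right scalar_prod_self)
  finally show ?thesis
    using normF_nonneg vnorm_nonneg by (intro vnorm_leI) simp_all
qed

lemma norm2_bdd_above: "bdd_above {vnorm (M *\<^sub>v x) | x. x \<in> carrier_vec (dim_col M) \<and> vnorm x = 1}"
  by (rule bdd_aboveI[of _ "normF M"]) (use vnorm_mult_le_normF[of M "dim_row M" "dim_col M"] in force)

lemma norm2_mult_vec_le:
  assumes x: "x \<in> carrier_vec (dim_col M)"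
  shows "vnorm (M *\<^sub>v x) \<le> norm2 M * vnorm x"
proof (cases "vnorm x = 0")
  case True
  hence "x = 0\<^sub>v (dim_col M)"
    using x vnorm_power2[of x] scalar_prod_self_eq_0_iff by fastforce
  hence "M *\<^sub>v x = 0\<^sub>v (dim_row M)" by auto
  hence "vnorm (M *\<^sub>v x) = 0" unfolding vnorm_def by simp
  thus ?thesis using True by simp
next
  case False
  hence pos: "vnorm x > 0" using vnorm_nonneg[of x] by simp
  define y where "y = (1 / vnorm x) \<cdot>\<^sub>v x"
  have y: "y \<in> carrier_vec (dim_col M)" "vnorm y = 1"
    using x pos unfolding y_def vnorm_smult by auto
  have "vnorm (M *\<^sub>v y) \<le> norm2 M"
    unfolding norm2_def by (rule cSup_upper[OF _ norm2_bdd_above]) (use y in blast)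
  moreover have "M *\<^sub>v y = (1 / vnorm x) \<cdot>\<^sub>v (M *\<^sub>v x)"
    unfolding y_def using x mult_mat_vec[of M "dim_row M" "dim_col M" x] by auto
  ultimately show ?thesis using pos by (simp add: vnorm_smult divide_le_eq mult.commute)
qed

lemma norm2_leI:
  assumes "0 < dim_col M"
    and "\<And>x. x \<in> carrier_vec (dim_col M) \<Longrightarrow> vnorm x = 1 \<Longrightarrow> vnorm (M *\<^sub>v x) \<le> B"
  shows "norm2 M \<le> B"
  unfolding norm2_def
proof (rule cSup_least)
  show "{vnorm (M *\<^sub>v x) |x. x \<in> carrier_vec (dim_col M) \<and> vnorm x = 1} \<noteq> {}"
    using vnorm_unit_vec[OF assms(1)] unit_vec_carrier by blast
qed (use assms(2) in blast)

lemma norm2_nonneg: "0 < dim_col M \<Longrightarrow> 0 \<le> norm2 M"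
  using norm2_mult_vec_le[of "unit_vec (dim_col M) 0" M] vnorm_unit_vec vnorm_nonneg
  by (metis mult.right_neutral order_trans unit_vec_carrier)

lemma abs_index_le_norm2:
  assumes "M \<in> carrier_mat a b" "i < a" "j < b"
  shows "\<bar>M $$ (i,j)\<bar> \<le> norm2 M"
proof -
  have "M $$ (i,j) = (M *\<^sub>v unit_vec b j) $ i"
    using assms by simp
  also have "\<bar>\<dots>\<bar> \<le> vnorm (M *\<^sub>v unit_vec b j)"
    using assms by (intro abs_index_le_vnorm) simp
  also have "\<dots> \<le> norm2 M"
    using norm2_mult_vec_le[of "unit_vec b j" M] vnorm_unit_vec[OF assms(3)] assms(1) by simp
  finally show ?thesis .
qed

lemma vnorm_row_le_norm2:
  assumes M: "M \<in> carrier_mat a b" and i: "i < a" and b: "0 < b"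
  shows "vnorm (row M i) \<le> norm2 M"
proof (cases "vnorm (row M i) = 0")
  case False
  have "(vnorm (row M i))^2 = (M *\<^sub>v row M i) $ i"
    using M i by (simp add: vnorm_power2)
  also have "\<dots> \<le> vnorm (M *\<^sub>v row M i)"
    using M i abs_index_le_vnorm[of i "M *\<^sub>v row M i"] by simp
  also have "\<dots> \<le> norm2 M * vnorm (row M i)"
    using M i by (intro norm2_mult_vec_le) auto
  finally show ?thesis
    using False vnorm_nonneg[of "row M i"] by (simp add: power2_eq_square)
next
  case True
  thus ?thesis using norm2_nonneg[of M] M b by simp
qed

lemma normF_power2_cols:
  assumes M: "(M::real mat) \<in> carrier_mat a b"
  shows "(normF M)^2 = (\<Sum>j<b. (M *\<^sub>v unit_vec b j) \<bullet> (M *\<^sub>v unit_vec b j))"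
proof -
  have "(normF M)^2 = (\<Sum>j<b. \<Sum>i<a. (M $$ (i,j))^2)"
    unfolding normF_power2 using M by (simp add: sum.swap[of _ "{..<a}"])
  also have "\<dots> = (\<Sum>j<b. (M *\<^sub>v unit_vec b j) \<bullet> (M *\<^sub>v unit_vec b j))"
    using M by (intro sum.cong refl) (simp add: scalar_prod_self)
  finally show ?thesis .
qed

lemma diagonal_le_normF:
  assumes M: "M \<in> carrier_mat a b" and "l \<le> a" "l \<le> b"
  shows "sqrt (\<Sum>j<l. (M $$ (j,j))^2) \<le> normF M"
proof -
  have "(\<Sum>j<l. (M $$ (j,j))^2) \<le> (\<Sum>j<l. \<Sum>i<a. (M $$ (i,j))^2)"
    using assms by (intro sum_mono member_le_sum) auto
  also have "\<dots> \<le> (\<Sum>j<b. \<Sum>i<a. (M $$ (i,j))^2)"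
    using assms by (intro sum_mono2) (auto intro: sum_nonneg)
  also have "\<dots> = (normF M)^2"
    unfolding normF_power2 using M by (simp add: sum.swap[of _ "{..<a}"])
  finally show ?thesis using normF_nonneg real_le_lsqrt by (metis real_sqrt_le_mono real_sqrt_unique)
qed

section \<open>Principal angles with a subspace that contains a graph\<close>

lemma vnorm_proj_compl_le:
  assumes X: "X \<in> carrier_mat N r" "X\<^sup>T * X = 1\<^sub>m r"
    and v: "(v::real vec) \<in> carrier_vec N" and w: "w \<in> carrier_vec r"
  shows "vnorm ((1\<^sub>m N - X * X\<^sup>T) *\<^sub>v v) \<le> vnorm (v - X *\<^sub>v w)"
proof -
  define u where "u = v - X *\<^sub>v w"
  define b where "b = X\<^sup>T *\<^sub>v u"
  have u: "u \<in> carrier_vec N" and b: "b \<in> carrier_vec r"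
    unfolding u_def b_def using X v w by auto
  have "X\<^sup>T *\<^sub>v v = b + w"
    unfolding b_def u_def using X v w orthonormal_cols_cancel[OF X w]
    by (subst mult_minus_distrib_mat_vec) (auto intro!: eq_vecI)
  have "(1\<^sub>m N - X * X\<^sup>T) *\<^sub>v v = v - X *\<^sub>v (X\<^sup>T *\<^sub>v v)"
    using X v by (subst minus_mult_distrib_mat_vec) auto
  also have "\<dots> = v - (X *\<^sub>v b + X *\<^sub>v w)"
    unfolding \<open>X\<^sup>T *\<^sub>v v = b + w\<close> using X b w by (subst mult_add_distrib_mat_vec) auto
  also have "\<dots> = u - X *\<^sub>v b"
    unfolding u_def using X b w v by (intro eq_vecI) auto
  finally have "(1\<^sub>m N - X * X\<^sup>T) *\<^sub>v v = u - X *\<^sub>v b" .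
  moreover have "(u - X *\<^sub>v b) \<bullet> (u - X *\<^sub>v b) = u \<bullet> u - 2 * (u \<bullet> (X *\<^sub>v b)) + (X *\<^sub>v b) \<bullet> (X *\<^sub>v b)"
    using u X b unfolding scalar_prod_def
    by (simp add: sum_subtractf sum.distrib sum_distrib_left algebra_simps power2_eq_square)
  moreover have "u \<bullet> (X *\<^sub>v b) = b \<bullet> b"
    using transpose_vec_mult_scalar[OF X(1) b u] unfolding b_def by simp
  moreover have "(X *\<^sub>v b) \<bullet> (X *\<^sub>v b) = b \<bullet> b"
    using orthonormal_cols_scalar_prod[OF X b] .
  ultimately show ?thesis
    unfolding vnorm_le_iff u_def[symmetric] using scalar_prod_self_nonneg[of b] by simp
qed

lemma append_carrier_vec_diff:
  "x \<in> carrier_vec k \<Longrightarrow> y \<in> carrier_vec (N - k) \<Longrightarrow> k \<le> N \<Longrightarrow> x @\<^sub>v y \<in> carrier_vec N"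
  using append_carrier_vec[of x k y "N - k"] by simp

lemma first_cols_carrier [simp]: "W \<in> carrier_mat N M \<Longrightarrow> first_cols k W \<in> carrier_mat N k"
  unfolding first_cols_def by auto

lemma first_cols_mult_vec:
  assumes W: "W \<in> carrier_mat N N'" and k: "k \<le> N'" and x: "x \<in> carrier_vec k"
  shows "first_cols k W *\<^sub>v x = W *\<^sub>v (x @\<^sub>v 0\<^sub>v (N' - k))"
proof (rule eq_vecI)
  fix i assume "i < dim_vec (W *\<^sub>v (x @\<^sub>v 0\<^sub>v (N' - k)))"
  hence i: "i < N" using W by simp
  have "(W *\<^sub>v (x @\<^sub>v 0\<^sub>v (N' - k))) $ i = (\<Sum>j<N'. W $$ (i,j) * (if j < k then x $ j else 0))"
    using W i x k by (auto simp: scalar_prod_def atLeast0LessThan intro!: sum.cong)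
  also have "\<dots> = (\<Sum>j<k. W $$ (i,j) * x $ j)"
    using k by (subst sum.mono_neutral_right[of "{..<N'}" "{..<k}"]) auto
  also have "\<dots> = (first_cols k W *\<^sub>v x) $ i"
    using W i x by (auto simp: scalar_prod_def first_cols_def atLeast0LessThan)
  finally show "(first_cols k W *\<^sub>v x) $ i = (W *\<^sub>v (x @\<^sub>v 0\<^sub>v (N' - k))) $ i" ..
qed (use W in \<open>simp add: first_cols_def\<close>)

lemma sin_angle_mat_carrier:
  "X \<in> carrier_mat N r \<Longrightarrow> Y \<in> carrier_mat N k \<Longrightarrow> sin_angle_mat X Y \<in> carrier_mat N k"
  unfolding sin_angle_mat_def by auto

lemma sin_angle_mat_first_cols_mult_vec:
  assumes X: "X \<in> carrier_mat N r" and W: "W \<in> carrier_mat N N" and "k \<le> N"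
    and x: "x \<in> carrier_vec k"
  shows "sin_angle_mat X (first_cols k W) *\<^sub>v x = (1\<^sub>m N - X * X\<^sup>T) *\<^sub>v (W *\<^sub>v (x @\<^sub>v 0\<^sub>v (N - k)))"
  using assms first_cols_mult_vec[OF W \<open>k \<le> N\<close> x] unfolding sin_angle_mat_def
  by (subst assoc_mult_mat_vec[of _ N N _ k]) (auto simp: first_cols_def)

lemma sin_angle_graph_le:
  assumes X: "X \<in> carrier_mat N r" "X\<^sup>T * X = 1\<^sub>m r"
    and W: "W \<in> carrier_mat N N" "W\<^sup>T * W = 1\<^sub>m N" and k: "k \<le> N"
    and H: "H \<in> carrier_mat (N - k) k"
    and graph: "\<And>x. x \<in> carrier_vec k \<Longrightarrow> W *\<^sub>v (x @\<^sub>v H *\<^sub>v x) \<in> mat_range X"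
    and x: "x \<in> carrier_vec k" and y: "y \<in> carrier_vec k"
  shows "(vnorm (sin_angle_mat X (first_cols k W) *\<^sub>v x))^2 \<le> (x - y) \<bullet> (x - y) + (H *\<^sub>v y) \<bullet> (H *\<^sub>v y)"
proof -
  obtain w where w: "w \<in> carrier_vec r" and Xw: "W *\<^sub>v (y @\<^sub>v H *\<^sub>v y) = X *\<^sub>v w"
    using graph[OF y] X(1) unfolding mat_range_def by auto
  have x0: "x @\<^sub>v 0\<^sub>v (N - k) \<in> carrier_vec N" and yH: "y @\<^sub>v H *\<^sub>v y \<in> carrier_vec N"
    using x y H k by (auto intro: append_carrier_vec_diff)
  have diff: "(x @\<^sub>v 0\<^sub>v (N - k)) - (y @\<^sub>v H *\<^sub>v y) = (x - y) @\<^sub>v (- (H *\<^sub>v y))"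
    using x y H by (intro eq_vecI) auto
  have "vnorm (sin_angle_mat X (first_cols k W) *\<^sub>v x) \<le> vnorm (W *\<^sub>v (x @\<^sub>v 0\<^sub>v (N - k)) - X *\<^sub>v w)"
    unfolding sin_angle_mat_first_cols_mult_vec[OF X(1) W(1) k x]
    using X W x0 w by (intro vnorm_proj_compl_le) auto
  also have "W *\<^sub>v (x @\<^sub>v 0\<^sub>v (N - k)) - X *\<^sub>v w = W *\<^sub>v ((x - y) @\<^sub>v (- (H *\<^sub>v y)))"
    unfolding Xw[symmetric] diff[symmetric] using W x0 yH
    by (subst mult_minus_distrib_mat_vec) auto
  finally have "(vnorm (sin_angle_mat X (first_cols k W) *\<^sub>v x))^2
      \<le> (W *\<^sub>v ((x - y) @\<^sub>v (- (H *\<^sub>v y)))) \<bullet> (W *\<^sub>v ((x - y) @\<^sub>v (- (H *\<^sub>v y))))"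
    unfolding vnorm_power2[symmetric] using vnorm_nonneg power_mono by blast
  also have "\<dots> = ((x - y) @\<^sub>v (- (H *\<^sub>v y))) \<bullet> ((x - y) @\<^sub>v (- (H *\<^sub>v y)))"
    using W x y H k by (intro orthonormal_cols_scalar_prod append_carrier_vec_diff) auto
  also have "\<dots> = (x - y) \<bullet> (x - y) + (- (H *\<^sub>v y)) \<bullet> (- (H *\<^sub>v y))"
    using x y H by (intro scalar_prod_append[of _ k _ "N - k"]) auto
  also have "(- (H *\<^sub>v y)) \<bullet> (- (H *\<^sub>v y)) = (H *\<^sub>v y) \<bullet> (H *\<^sub>v y)"
    unfolding scalar_prod_self by simp
  finally show ?thesis .
qed

lemma norm2_sin_angle_graph_le:
  assumes X: "X \<in> carrier_mat N r" "X\<^sup>T * X = 1\<^sub>m r"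
    and W: "W \<in> carrier_mat N N" "W\<^sup>T * W = 1\<^sub>m N" and k: "0 < k" "k \<le> N"
    and H: "H \<in> carrier_mat (N - k) k"
    and graph: "\<And>x. x \<in> carrier_vec k \<Longrightarrow> W *\<^sub>v (x @\<^sub>v H *\<^sub>v x) \<in> mat_range X"
    and T: "0 \<le> T" "\<And>x. x \<in> carrier_vec k \<Longrightarrow> vnorm (H *\<^sub>v x) \<le> T * vnorm x"
  shows "norm2 (sin_angle_mat X (first_cols k W)) \<le> T / sqrt (1 + T^2)"
proof (rule norm2_leI)
  let ?S = "sin_angle_mat X (first_cols k W)"
  have S: "?S \<in> carrier_mat N k"
    using X W by (intro sin_angle_mat_carrier) auto
  thus "0 < dim_col ?S" using k by simp
  fix x assume "x \<in> carrier_vec (dim_col ?S)" and x1: "vnorm x = 1"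
  hence x: "x \<in> carrier_vec k" using S by simp
  define \<alpha> where "\<alpha> = 1 / (1 + T^2)"
  have pos: "0 < 1 + T^2" by (simp add: add_pos_nonneg)
  hence \<alpha>: "0 \<le> \<alpha>" "1 - \<alpha> = T^2 * \<alpha>"
    unfolding \<alpha>_def by (simp_all add: field_simps)
  have "(vnorm (?S *\<^sub>v x))^2 \<le> (x - \<alpha> \<cdot>\<^sub>v x) \<bullet> (x - \<alpha> \<cdot>\<^sub>v x) + (H *\<^sub>v (\<alpha> \<cdot>\<^sub>v x)) \<bullet> (H *\<^sub>v (\<alpha> \<cdot>\<^sub>v x))"
    using x by (intro sin_angle_graph_le[OF X W(1,2) k(2) H graph]) auto
  also have "x - \<alpha> \<cdot>\<^sub>v x = (1 - \<alpha>) \<cdot>\<^sub>v x"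
    using x by (intro eq_vecI) (auto simp: algebra_simps)
  also have "((1 - \<alpha>) \<cdot>\<^sub>v x) \<bullet> ((1 - \<alpha>) \<cdot>\<^sub>v x) = (1 - \<alpha>)^2"
    unfolding vnorm_power2[symmetric] vnorm_smult x1 by (simp add: power2_abs)
  also have "(H *\<^sub>v (\<alpha> \<cdot>\<^sub>v x)) \<bullet> (H *\<^sub>v (\<alpha> \<cdot>\<^sub>v x)) \<le> (T * \<alpha>)^2"
    using T(2)[of "\<alpha> \<cdot>\<^sub>v x"] x x1 \<alpha>(1) vnorm_nonneg
    unfolding vnorm_power2[symmetric] vnorm_smult by (simp add: power_mono)
  also have "(1 - \<alpha>)^2 + (T * \<alpha>)^2 = T^2 * \<alpha> * ((1 + T^2) * \<alpha>)"
    unfolding \<alpha>(2) by (simp add: algebra_simps power2_eq_square)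
  also have "\<dots> = T^2 / (1 + T^2)"
    unfolding \<alpha>_def using pos by simp
  finally have "(vnorm (?S *\<^sub>v x))^2 \<le> T^2 / (1 + T^2)"
    by simp
  hence "vnorm (?S *\<^sub>v x) \<le> sqrt (T^2 / (1 + T^2))"
    by (rule real_le_rsqrt)
  thus "vnorm (?S *\<^sub>v x) \<le> T / sqrt (1 + T^2)"
    using T(1) by (simp add: real_sqrt_divide)
qed

lemma gram_plus_one_inverse_exists:
  assumes H: "(H::real mat) \<in> carrier_mat c k"
  obtains Z where "Z \<in> carrier_mat k k" "(1\<^sub>m k + H\<^sup>T * H) * Z = 1\<^sub>m k" "Z * (1\<^sub>m k + H\<^sup>T * H) = 1\<^sub>m k"
proof -
  let ?G = "1\<^sub>m k + H\<^sup>T * H"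
  have G: "?G \<in> carrier_mat k k" using H by auto
  have "det ?G \<noteq> 0"
  proof
    assume "det ?G = 0"
    then obtain v where v: "v \<in> carrier_vec k" "v \<noteq> 0\<^sub>v k" "?G *\<^sub>v v = 0\<^sub>v k"
      using det_0_iff_vec_prod_zero_field[OF G] by blast
    have Gv: "?G *\<^sub>v v = v + (H\<^sup>T * H) *\<^sub>v v"
      using H v by (subst add_mult_distrib_mat_vec) auto
    have "0 = (?G *\<^sub>v v) \<bullet> v" using v(1) unfolding v(3) by simp
    also have "\<dots> = (v + (H\<^sup>T * H) *\<^sub>v v) \<bullet> v" unfolding Gv ..
    also have "\<dots> = v \<bullet> v + ((H\<^sup>T * H) *\<^sub>v v) \<bullet> v"
      using H v by (subst add_scalar_prod_distrib) auto
    also have "\<dots> = v \<bullet> v + (H *\<^sub>v v) \<bullet> (H *\<^sub>v v)"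
      using quadratic_form_gram[OF H v(1)] by simp
    finally have "v \<bullet> v = 0"
      using scalar_prod_self_nonneg[of v] scalar_prod_self_nonneg[of "H *\<^sub>v v"] by linarith
    thus False using v scalar_prod_self_eq_0_iff by blast
  qed
  from det_non_zero_imp_unit[OF G this, of "()"] that show thesis
    unfolding Units_def ring_mat_simps by auto
qed

lemma gram_plus_one_inverse_mult_vec:
  assumes H: "(H::real mat) \<in> carrier_mat c k" and Z: "Z \<in> carrier_mat k k"
    and GZ: "(1\<^sub>m k + H\<^sup>T * H) * Z = 1\<^sub>m k" and v: "v \<in> carrier_vec k"
  shows "Z *\<^sub>v v + (H\<^sup>T * H) *\<^sub>v (Z *\<^sub>v v) = v"
proof -
  have "Z *\<^sub>v v + (H\<^sup>T * H) *\<^sub>v (Z *\<^sub>v v) = (1\<^sub>m k + H\<^sup>T * H) *\<^sub>v (Z *\<^sub>v v)"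
    using H Z v by (subst add_mult_distrib_mat_vec) auto
  also have "\<dots> = ((1\<^sub>m k + H\<^sup>T * H) * Z) *\<^sub>v v"
    using H Z v by (subst assoc_mult_mat_vec) auto
  finally show ?thesis using GZ v by simp
qed

lemma graph_residual_gram_inverse:
  assumes H: "(H::real mat) \<in> carrier_mat c k" and Z: "Z \<in> carrier_mat k k"
    and GZ: "(1\<^sub>m k + H\<^sup>T * H) * Z = 1\<^sub>m k" and i: "i < k"
  defines "e \<equiv> unit_vec k i"
  shows "(e - Z *\<^sub>v e) \<bullet> (e - Z *\<^sub>v e) + (H *\<^sub>v (Z *\<^sub>v e)) \<bullet> (H *\<^sub>v (Z *\<^sub>v e)) = 1 - Z $$ (i,i)"
proof -
  define y where "y = Z *\<^sub>v e"
  define g where "g = (H\<^sup>T * H) *\<^sub>v y"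
  have e: "e \<in> carrier_vec k" and y: "y \<in> carrier_vec k" and g: "g \<in> carrier_vec k"
    unfolding e_def y_def g_def using H Z by auto
  have yg: "y + g = e"
    unfolding y_def g_def using gram_plus_one_inverse_mult_vec[OF H Z GZ e] .
  hence eyg: "e - y = g" using y g by auto
  have "(e - y) \<bullet> (e - y) + (H *\<^sub>v y) \<bullet> (H *\<^sub>v y) = g \<bullet> (g + y)"
    unfolding eyg g_def using quadratic_form_gram[OF H y] H y
    by (simp add: scalar_prod_add_distrib[of _ k])
  also have "\<dots> = g $ i"
    using yg g y i by (simp add: comm_add_vec e_def)
  also have "\<dots> = 1 - Z $$ (i,i)"
    using eyg[symmetric] e y i Z by (simp add: e_def y_def)
  finally show ?thesis unfolding y_def .
qed

lemma trace_gram_inverse: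
  assumes H: "(H::real mat) \<in> carrier_mat c k" and Z: "Z \<in> carrier_mat k k"
    and ZG: "Z * (1\<^sub>m k + H\<^sup>T * H) = 1\<^sub>m k"
  shows "(\<Sum>i<k. 1 - Z $$ (i,i)) = (\<Sum>j<c. row H j \<bullet> (Z *\<^sub>v row H j))"
proof -
  have "Z * (1\<^sub>m k + H\<^sup>T * H) = Z * 1\<^sub>m k + Z * (H\<^sup>T * H)"
    using H Z by (subst mult_add_distrib_mat) auto
  hence ZG': "1\<^sub>m k = Z + Z * (H\<^sup>T * H)" using ZG Z by simp
  have "1 - Z $$ (i,i) = (\<Sum>l<k. Z $$ (i,l) * (\<Sum>j<c. H $$ (j,l) * H $$ (j,i)))" if i: "i < k" for i
  proof -
    have "1 - Z $$ (i,i) = (Z * (H\<^sup>T * H)) $$ (i,i)"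
      using arg_cong[OF ZG', of "\<lambda>M. M $$ (i,i)"] i H Z by simp
    thus ?thesis using i H Z by (auto simp: scalar_prod_def atLeast0LessThan intro!: sum.cong)
  qed
  hence "(\<Sum>i<k. 1 - Z $$ (i,i)) = (\<Sum>i<k. \<Sum>l<k. \<Sum>j<c. Z $$ (i,l) * H $$ (j,l) * H $$ (j,i))"
    by (simp add: sum_distrib_left mult.assoc)
  also have "\<dots> = (\<Sum>i<k. \<Sum>j<c. \<Sum>l<k. Z $$ (i,l) * H $$ (j,l) * H $$ (j,i))"
    by (rule sum.cong[OF refl], rule sum.swap)
  also have "\<dots> = (\<Sum>j<c. \<Sum>i<k. \<Sum>l<k. Z $$ (i,l) * H $$ (j,l) * H $$ (j,i))"
    by (rule sum.swap)
  also have "\<dots> = (\<Sum>j<c. row H j \<bullet> (Z *\<^sub>v row H j))"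
    using H Z by (auto simp: scalar_prod_def atLeast0LessThan sum_distrib_left mult_ac intro!: sum.cong)
  finally show ?thesis .
qed

lemma le_ratio_of_quadratic:
  fixes s t y :: real
  assumes "y + s^2 \<le> s" "s^2 \<le> t * y" "0 \<le> t" "0 \<le> y"
  shows "s \<le> t / (1 + t)"
proof -
  have "0 \<le> s" using assms(1,4) zero_le_power2[of s] by linarith
  have "t * (y + s^2) \<le> t * s" using mult_left_mono[OF assms(1,3)] .
  hence "s * (s * (1 + t)) \<le> s * t"
    using assms(2) by (simp add: algebra_simps power2_eq_square)
  hence "s * (1 + t) \<le> t" if "0 < s"
    using that by simp
  thus ?thesis
    using \<open>0 \<le> s\<close> assms(3) by (cases "s = 0") (simp_all add: le_divide_eq)
qed

(* For y = (I + H\<^sup>T H)^(-1) h one has h\<^sup>T y = |y|^2 + |H y|^2 \<ge> |y|^2 + (h\<^sup>T y)^2, since h\<^sup>T y is an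
   entry of H y; together with Cauchy-Schwarz this bounds h\<^sup>T y. *)

lemma row_gram_inverse_le:
  assumes H: "(H::real mat) \<in> carrier_mat c k" and Z: "Z \<in> carrier_mat k k"
    and GZ: "(1\<^sub>m k + H\<^sup>T * H) * Z = 1\<^sub>m k" and j: "j < c"
  shows "row H j \<bullet> (Z *\<^sub>v row H j) \<le> (row H j \<bullet> row H j) / (1 + row H j \<bullet> row H j)"
proof -
  define h where "h = row H j"
  define y where "y = Z *\<^sub>v h"
  have h: "h \<in> carrier_vec k" and y: "y \<in> carrier_vec k"
    unfolding h_def y_def using H Z j by auto
  have Hy: "(H\<^sup>T * H) *\<^sub>v y \<in> carrier_vec k" using H y by simp
  have "h = y + (H\<^sup>T * H) *\<^sub>v y"
    using gram_plus_one_inverse_mult_vec[OF H Z GZ h] unfolding y_def ..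
  hence "h \<bullet> y = y \<bullet> y + ((H\<^sup>T * H) *\<^sub>v y) \<bullet> y"
    using add_scalar_prod_distrib[OF y Hy y] by simp
  also have "((H\<^sup>T * H) *\<^sub>v y) \<bullet> y = (H *\<^sub>v y) \<bullet> (H *\<^sub>v y)"
    by (rule quadratic_form_gram[OF H y])
  finally have hy: "h \<bullet> y = y \<bullet> y + (H *\<^sub>v y) \<bullet> (H *\<^sub>v y)" .
  have "(h \<bullet> y)^2 = ((H *\<^sub>v y) $ j)^2" unfolding h_def using H j by simp
  also have "\<dots> \<le> (H *\<^sub>v y) \<bullet> (H *\<^sub>v y)"
    unfolding scalar_prod_self using H j by (intro member_le_sum) auto
  finally have "y \<bullet> y + (h \<bullet> y)^2 \<le> h \<bullet> y" using hy by linarith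
  moreover have "(h \<bullet> y)^2 \<le> (h \<bullet> h) * (y \<bullet> y)"
    using h y by (intro cauchy_schwarz_scalar_prod) auto
  ultimately show ?thesis
    unfolding h_def[symmetric] y_def[symmetric]
    using le_ratio_of_quadratic scalar_prod_self_nonneg by blast
qed

lemma normF_sin_angle_graph_le:
  assumes X: "X \<in> carrier_mat N r" "X\<^sup>T * X = 1\<^sub>m r"
    and W: "W \<in> carrier_mat N N" "W\<^sup>T * W = 1\<^sub>m N" and k: "k \<le> N"
    and H: "H \<in> carrier_mat (N - k) k"
    and graph: "\<And>x. x \<in> carrier_vec k \<Longrightarrow> W *\<^sub>v (x @\<^sub>v H *\<^sub>v x) \<in> mat_range X"
  shows "(normF (sin_angle_mat X (first_cols k W)))^2
    \<le> (\<Sum>j<N - k. (row H j \<bullet> row H j) / (1 + row H j \<bullet> row H j))"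
proof -
  let ?S = "sin_angle_mat X (first_cols k W)"
  let ?e = "unit_vec k :: nat \<Rightarrow> real vec"
  obtain Z where Z: "Z \<in> carrier_mat k k" and GZ: "(1\<^sub>m k + H\<^sup>T * H) * Z = 1\<^sub>m k"
    and ZG: "Z * (1\<^sub>m k + H\<^sup>T * H) = 1\<^sub>m k"
    using gram_plus_one_inverse_exists[OF H] by blast
  have "?S \<in> carrier_mat N k" using X W by (intro sin_angle_mat_carrier) auto
  hence "(normF ?S)^2 = (\<Sum>i<k. (vnorm (?S *\<^sub>v ?e i))^2)"
    by (simp add: normF_power2_cols vnorm_power2)
  also have "\<dots> \<le> (\<Sum>i<k. (?e i - Z *\<^sub>v ?e i) \<bullet> (?e i - Z *\<^sub>v ?e i)
      + (H *\<^sub>v (Z *\<^sub>v ?e i)) \<bullet> (H *\<^sub>v (Z *\<^sub>v ?e i)))"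
    using Z by (intro sum_mono sin_angle_graph_le[OF X W k H graph]) auto
  also have "\<dots> = (\<Sum>i<k. 1 - Z $$ (i,i))"
    using graph_residual_gram_inverse[OF H Z GZ] by simp
  also have "\<dots> = (\<Sum>j<N - k. row H j \<bullet> (Z *\<^sub>v row H j))"
    by (rule trace_gram_inverse[OF H Z ZG])
  also have "\<dots> \<le> (\<Sum>j<N - k. (row H j \<bullet> row H j) / (1 + row H j \<bullet> row H j))"
    using row_gram_inverse_le[OF H Z GZ] by (intro sum_mono) auto
  finally show ?thesis .
qed

section \<open>Moore-Penrose inverse of a matrix of full row rank\<close>

lemma full_row_rank_transpose_kernel:
  assumes M: "(M::real mat) \<in> carrier_mat k d" and rk: "mrank k M = k"
    and v: "v \<in> carrier_vec k" and Mv: "M\<^sup>T *\<^sub>v v = 0\<^sub>v d"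
  shows "v = 0\<^sub>v k"
proof -
  interpret vs: vec_space "TYPE(real)" k .
  have cols: "set (cols M) \<subseteq> carrier_vec k" using M cols_dim by blast
  obtain S where S: "finite S" "maximal S (\<lambda>T. T \<subseteq> set (cols M) \<and> vs.lin_indpt T)"
    using maximal_exists_superset[of "set (cols M)" "\<lambda>T. T \<subseteq> set (cols M) \<and> vs.lin_indpt T" "{}"]
    by (auto simp: vs.lin_dep_def)
  have SM: "S \<subseteq> set (cols M)" "vs.lin_indpt S" using S(2) unfolding maximal_def by auto
  have "card S = k" using vs.rank_card_indpt[OF M S(2)] rk by simp
  hence "vs.basis S"
    using vs.dim_li_is_basis[OF vs.fin_dim S(1) _ SM(2)] SM(1) cols vs.dim_is_n by auto
  hence span: "vs.span S = carrier_vec k" unfolding vs.basis_def by simp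
  define Vperp where "Vperp = {w \<in> carrier_vec k. v \<bullet> w = 0}"
  have sub: "submodule class_ring Vperp vs.V"
    unfolding submodule_def Vperp_def
  proof (intro conjI allI impI)
    show "module class_ring vs.V" by (rule vec_module)
  qed (auto simp: v scalar_prod_add_distrib[OF v] class_ring_simps module_vec_simps)
  have "set (cols M) \<subseteq> Vperp"
  proof
    fix c assume c: "c \<in> set (cols M)"
    then obtain j where j: "j < d" "c = col M j" using M by (auto simp: cols_def)
    have "v \<bullet> c = c \<bullet> v" using c cols v by (intro comm_scalar_prod) auto
    also have "\<dots> = (M\<^sup>T *\<^sub>v v) $ j" using j M by simp
    finally have "v \<bullet> c = (M\<^sup>T *\<^sub>v v) $ j" .
    thus "c \<in> Vperp" unfolding Vperp_def using Mv j c cols by auto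
  qed
  hence "vs.span S \<subseteq> Vperp" using vs.span_is_subset[OF _ sub] SM(1) by blast
  hence "v \<in> Vperp" using v span by auto
  thus ?thesis using v scalar_prod_self_eq_0_iff unfolding Vperp_def by blast
qed

lemma gram_full_row_rank_inverse:
  assumes M: "(M::real mat) \<in> carrier_mat k d" and rk: "mrank k M = k"
  obtains B where "B \<in> carrier_mat k k" "B * (M * M\<^sup>T) = 1\<^sub>m k" "(M * M\<^sup>T) * B = 1\<^sub>m k" "B\<^sup>T = B"
proof -
  let ?G = "M * M\<^sup>T"
  have G: "?G \<in> carrier_mat k k" and Mt: "M\<^sup>T \<in> carrier_mat d k" using M by auto
  have "det ?G \<noteq> 0"
  proof
    assume "det ?G = 0"
    then obtain v where v: "v \<in> carrier_vec k" "v \<noteq> 0\<^sub>v k" "?G *\<^sub>v v = 0\<^sub>v k"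
      using det_0_iff_vec_prod_zero_field[OF G] by blast
    have "(M\<^sup>T *\<^sub>v v) \<bullet> (M\<^sup>T *\<^sub>v v) = 0"
      using quadratic_form_gram[OF Mt v(1)] v by simp
    moreover have "M\<^sup>T *\<^sub>v v \<in> carrier_vec d" using Mt v(1) by simp
    ultimately have "M\<^sup>T *\<^sub>v v = 0\<^sub>v d" using scalar_prod_self_eq_0_iff by blast
    thus False using full_row_rank_transpose_kernel[OF M rk v(1)] v(2) by simp
  qed
  from det_non_zero_imp_unit[OF G this, of "()"]
  obtain B where B: "B \<in> carrier_mat k k" "B * ?G = 1\<^sub>m k" "?G * B = 1\<^sub>m k"
    unfolding Units_def ring_mat_simps by auto
  have "?G\<^sup>T = ?G" using transpose_mult[OF M Mt] by simp
  hence "B\<^sup>T * ?G = 1\<^sub>m k"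
    using transpose_mult[of "?G\<^sup>T" k k B k] G B by simp
  hence "B\<^sup>T = B"
    using B G assoc_mult_mat[of "B\<^sup>T" k k ?G k B k] by simp
  with B that show thesis by blast
qed

lemma pinv_full_row_rank:
  assumes M: "(M::real mat) \<in> carrier_mat k d" and rk: "mrank k M = k"
  shows "pinv M \<in> carrier_mat d k" and "M * pinv M = 1\<^sub>m k"
proof -
  obtain B where B: "B \<in> carrier_mat k k" "B * (M * M\<^sup>T) = 1\<^sub>m k" "(M * M\<^sup>T) * B = 1\<^sub>m k"
    "B\<^sup>T = B"
    using gram_full_row_rank_inverse[OF M rk] by blast
  have Mt: "M\<^sup>T \<in> carrier_mat d k" using M by auto
  define X0 where "X0 = M\<^sup>T * B"
  have X0: "X0 \<in> carrier_mat d k" unfolding X0_def using M B by auto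
  have MX0: "M * X0 = 1\<^sub>m k"
    unfolding X0_def using assoc_mult_mat[OF M Mt B(1)] B(3) by simp
  have "pinv M = X0"
    unfolding pinv_def
  proof (rule the_equality)
    have "(X0 * M)\<^sup>T = X0 * M"
      using transpose_mult[OF X0 M] transpose_mult[OF Mt B(1)] assoc_mult_mat[OF Mt B(1) M] B(4)
      unfolding X0_def by simp
    moreover have "X0 * M * X0 = X0" using assoc_mult_mat[OF X0 M X0] MX0 X0 by simp
    ultimately show "X0 \<in> carrier_mat (dim_col M) (dim_row M) \<and> M * X0 * M = M \<and> X0 * M * X0 = X0 \<and>
        (M * X0)\<^sup>T = M * X0 \<and> (X0 * M)\<^sup>T = X0 * M"
      using X0 MX0 M by simp
  next
    fix X assume P: "X \<in> carrier_mat (dim_col M) (dim_row M) \<and> M * X * M = M \<and> X * M * X = X \<and>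
        (M * X)\<^sup>T = M * X \<and> (X * M)\<^sup>T = X * M"
    hence X: "X \<in> carrier_mat d k" and Xt: "X\<^sup>T \<in> carrier_mat k d" using M by auto
    (* M = M X M = M (X M)\<^sup>T = M M\<^sup>T X\<^sup>T, so X\<^sup>T = B M *)
    have "M = M * (M\<^sup>T * X\<^sup>T)"
      using P transpose_mult[OF X M] assoc_mult_mat[OF M X M] by simp
    hence "B * M = (B * (M * M\<^sup>T)) * X\<^sup>T"
      using assoc_mult_mat[OF M Mt Xt] assoc_mult_mat[OF B(1) _ Xt, of "M * M\<^sup>T"] M by simp
    hence "X\<^sup>T = B * M" using B(2) Xt by simp
    hence "X = M\<^sup>T * B" using transpose_mult[OF B(1) M] B(4) by (metis transpose_transpose)
    thus "X = X0" unfolding X0_def .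
  qed
  thus "pinv M \<in> carrier_mat d k" "M * pinv M = 1\<^sub>m k" using X0 MX0 by simp_all
qed

section \<open>The singular value decomposition\<close>

(* Multiplication by the leading N x N block of \<Sigma>^a padded with zeros; the singular values are
   indexed from 1 but vector entries from 0. *)
definition sv_power_vec :: "(nat \<Rightarrow> real) \<Rightarrow> nat \<Rightarrow> nat \<Rightarrow> nat \<Rightarrow> real vec \<Rightarrow> real vec" where
  "sv_power_vec \<sigma> n a N v = vec N (\<lambda>i. (if i < n then \<sigma> (Suc i) ^ a else 0) * v $ i)"

lemma sv_power_vec_carrier [simp]: "sv_power_vec \<sigma> n a N v \<in> carrier_vec N"
  unfolding sv_power_vec_def by simp

lemma sv_power_vec_dim [simp]: "dim_vec (sv_power_vec \<sigma> n a N v) = N"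
  unfolding sv_power_vec_def by simp

lemma sv_power_vec_0: "v \<in> carrier_vec n \<Longrightarrow> sv_power_vec \<sigma> n 0 n v = v"
  unfolding sv_power_vec_def by auto

lemma sv_power_vec_sv_power_vec:
  "n \<le> N' \<Longrightarrow> sv_power_vec \<sigma> n a N (sv_power_vec \<sigma> n b N' v) = sv_power_vec \<sigma> n (a + b) N v"
  unfolding sv_power_vec_def by (intro eq_vecI) (auto simp: power_add)

locale real_svd =
  fixes A U \<Sigma> V :: "real mat" and \<sigma> :: "nat \<Rightarrow> real" and m n :: nat
  assumes A: "A \<in> carrier_mat m n" and n_le_m: "n \<le> m"
    and U: "U \<in> carrier_mat m m" "U\<^sup>T * U = 1\<^sub>m m" "U * U\<^sup>T = 1\<^sub>m m"
    and V: "V \<in> carrier_mat n n" "V\<^sup>T * V = 1\<^sub>m n"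
    and Sigma: "\<Sigma> \<in> carrier_mat m n"
      "\<And>i j. i < m \<Longrightarrow> j < n \<Longrightarrow> i \<noteq> j \<Longrightarrow> \<Sigma> $$ (i,j) = 0"
      "\<And>i. i < n \<Longrightarrow> \<Sigma> $$ (i,i) = \<sigma> (Suc i)"
    and svd: "A = U * \<Sigma> * V\<^sup>T"
begin

lemma Sigma_mult_vec:
  assumes t: "t \<in> carrier_vec n"
  shows "\<Sigma> *\<^sub>v t = sv_power_vec \<sigma> n 1 m t"
proof (rule eq_vecI)
  fix i assume "i < dim_vec (sv_power_vec \<sigma> n 1 m t)"
  hence i: "i < m" by simp
  have "(\<Sigma> *\<^sub>v t) $ i = (\<Sum>j<n. \<Sigma> $$ (i,j) * t $ j)"
    using Sigma i t by (auto simp: scalar_prod_def atLeast0LessThan intro!: sum.cong)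
  also have "\<dots> = (\<Sum>j<n. if j = i then \<Sigma> $$ (i,j) * t $ j else 0)"
    using Sigma(2)[of i] i by (intro sum.cong) auto
  finally show "(\<Sigma> *\<^sub>v t) $ i = sv_power_vec \<sigma> n 1 m t $ i"
    using Sigma(3) i by (simp add: sv_power_vec_def)
qed (use Sigma in simp)

lemma Sigma_transpose_mult_vec:
  assumes s: "s \<in> carrier_vec m"
  shows "\<Sigma>\<^sup>T *\<^sub>v s = sv_power_vec \<sigma> n 1 n s"
proof (rule eq_vecI)
  fix i assume "i < dim_vec (sv_power_vec \<sigma> n 1 n s)"
  hence i: "i < n" by simp
  have "(\<Sigma>\<^sup>T *\<^sub>v s) $ i = (\<Sum>l<m. \<Sigma> $$ (l,i) * s $ l)"
    using Sigma i s by (auto simp: scalar_prod_def atLeast0LessThan intro!: sum.cong)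
  also have "\<dots> = (\<Sum>l<m. if l = i then \<Sigma> $$ (l,i) * s $ l else 0)"
    using Sigma(2)[of _ i] i by (intro sum.cong) auto
  finally show "(\<Sigma>\<^sup>T *\<^sub>v s) $ i = sv_power_vec \<sigma> n 1 n s $ i"
    using Sigma(3) i n_le_m by (simp add: sv_power_vec_def)
qed (use Sigma in simp)

lemma mult_V:
  assumes t: "t \<in> carrier_vec n"
  shows "A *\<^sub>v (V *\<^sub>v t) = U *\<^sub>v (\<Sigma> *\<^sub>v t)"
  using U(1) Sigma(1) V t orthonormal_cols_cancel[OF V t]
  unfolding svd by (simp add: assoc_mult_mat_vec[of _ m n _ n] assoc_mult_mat_vec[of _ m m _ n])

lemma transpose_mult_U:
  assumes s: "s \<in> carrier_vec m"
  shows "A\<^sup>T *\<^sub>v (U *\<^sub>v s) = V *\<^sub>v (\<Sigma>\<^sup>T *\<^sub>v s)"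
proof -
  have "A\<^sup>T = V * \<Sigma>\<^sup>T * U\<^sup>T"
    unfolding svd using U(1) Sigma(1) V(1)
    by (simp add: transpose_mult[of _ m n _ n] transpose_mult[of _ m m _ n]
        assoc_mult_mat[of _ n n _ m _ m])
  thus ?thesis
    using U Sigma(1) V(1) s orthonormal_cols_cancel[OF U(1,2) s]
    by (simp add: assoc_mult_mat_vec[of _ n m _ m] assoc_mult_mat_vec[of _ n n _ m])
qed

lemma gram_power_mult_V:
  "t \<in> carrier_vec n \<Longrightarrow> (A\<^sup>T * A) ^\<^sub>m q *\<^sub>v (V *\<^sub>v t) = V *\<^sub>v sv_power_vec \<sigma> n (2 * q) n t"
proof (induction q arbitrary: t)
  case 0
  thus ?case using A V by (simp add: sv_power_vec_0)
next
  case (Suc q)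
  have "(A\<^sup>T * A) *\<^sub>v (V *\<^sub>v t) = V *\<^sub>v sv_power_vec \<sigma> n 2 n t"
    using A V Suc.prems n_le_m
    by (simp add: assoc_mult_mat_vec[of _ n m _ n] mult_V transpose_mult_U Sigma_mult_vec
        Sigma_transpose_mult_vec sv_power_vec_sv_power_vec numeral_2_eq_2)
  moreover have "(A\<^sup>T * A) ^\<^sub>m Suc q *\<^sub>v (V *\<^sub>v t) = (A\<^sup>T * A) ^\<^sub>m q *\<^sub>v ((A\<^sup>T * A) *\<^sub>v (V *\<^sub>v t))"
    using A V Suc.prems by (simp add: assoc_mult_mat_vec[of _ n n _ n])
  ultimately show ?case
    using Suc.IH[of "sv_power_vec \<sigma> n 2 n t"] by (simp add: sv_power_vec_sv_power_vec)
qed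

lemma sketch_mult_vec:
  assumes \<Phi>: "\<Phi> \<in> carrier_mat m d" and z: "z \<in> carrier_vec d"
  shows "((A\<^sup>T * A) ^\<^sub>m q * A\<^sup>T * \<Phi>) *\<^sub>v z = V *\<^sub>v sv_power_vec \<sigma> n (2 * q + 1) n (U\<^sup>T *\<^sub>v (\<Phi> *\<^sub>v z))"
proof -
  define s where "s = U\<^sup>T *\<^sub>v (\<Phi> *\<^sub>v z)"
  have s: "s \<in> carrier_vec m" unfolding s_def using U \<Phi> z by simp
  have G: "(A\<^sup>T * A) ^\<^sub>m q \<in> carrier_mat n n" and At: "A\<^sup>T \<in> carrier_mat n m" using A by auto
  have "\<Phi> *\<^sub>v z = U *\<^sub>v s"
    unfolding s_def using U \<Phi> z by (simp flip: assoc_mult_mat_vec[of _ m m _ m])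
  hence "((A\<^sup>T * A) ^\<^sub>m q * A\<^sup>T * \<Phi>) *\<^sub>v z = (A\<^sup>T * A) ^\<^sub>m q *\<^sub>v (A\<^sup>T *\<^sub>v (U *\<^sub>v s))"
    using assoc_mult_mat_vec[OF mult_carrier_mat[OF G At] \<Phi> z] assoc_mult_mat_vec[OF G At] U s
    by simp
  also have "\<dots> = V *\<^sub>v sv_power_vec \<sigma> n (2 * q + 1) n s"
    using s n_le_m by (simp add: transpose_mult_U Sigma_transpose_mult_vec gram_power_mult_V
        sv_power_vec_sv_power_vec)
  finally show ?thesis unfolding s_def .
qed

lemma mult_sketch_mult_vec:
  assumes "\<Phi> \<in> carrier_mat m d" and "z \<in> carrier_vec d"
  shows "A *\<^sub>v (((A\<^sup>T * A) ^\<^sub>m q * A\<^sup>T * \<Phi>) *\<^sub>v z) = U *\<^sub>v sv_power_vec \<sigma> n (2 * q + 2) m (U\<^sup>T *\<^sub>v (\<Phi> *\<^sub>v z))"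
  unfolding sketch_mult_vec[OF assms]
  by (simp add: mult_V Sigma_mult_vec sv_power_vec_sv_power_vec)

end

section \<open>Subspaces containing the range of a sketch\<close>

lemma ratio_one_plus_le:
  fixes r u L :: real
  assumes "0 \<le> r" "r \<le> u^2" "0 \<le> L" "L \<le> u"
  shows "r / (1 + r) \<le> u^2 / (1 + L^2)"
proof -
  have "r / (1 + r) \<le> u^2 / (1 + u^2)"
    using assms(1,2) by (simp add: field_simps add_pos_nonneg)
  also have "\<dots> \<le> u^2 / (1 + L^2)"
    using assms(3,4) power_mono[OF assms(4,3), of 2]
    by (intro divide_left_mono) (auto intro!: mult_pos_pos add_pos_nonneg)
  finally show ?thesis .
qed

lemma ratio_le_scaled:
  fixes \<gamma> \<rho> \<delta> c r :: real
  assumes "0 \<le> \<gamma>" "\<gamma> \<le> \<rho>" "\<rho> \<le> \<delta>" "0 \<le> c" "0 \<le> r" "r \<le> (\<rho> ^ Suc b * c)^2"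
  shows "r / (1 + r) \<le> (\<delta> ^ b * c * \<rho>)^2 / (1 + (\<gamma> ^ Suc b * c)^2)"
proof -
  have "r / (1 + r) \<le> (\<rho> ^ Suc b * c)^2 / (1 + (\<gamma> ^ Suc b * c)^2)"
    using assms by (intro ratio_one_plus_le mult_right_mono power_mono) auto
  also have "\<rho> ^ Suc b * c \<le> \<delta> ^ b * c * \<rho>"
    using assms by (auto simp: mult_ac intro!: mult_left_mono power_mono)
  hence "(\<rho> ^ Suc b * c)^2 \<le> (\<delta> ^ b * c * \<rho>)^2"
    using assms by (intro power_mono) auto
  hence "(\<rho> ^ Suc b * c)^2 / (1 + (\<gamma> ^ Suc b * c)^2) \<le> (\<delta> ^ b * c * \<rho>)^2 / (1 + (\<gamma> ^ Suc b * c)^2)"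
    by (intro divide_right_mono) (auto intro: add_nonneg_nonneg)
  finally show ?thesis .
qed

(* The matrix \<Sigma>perp^a F \<Sigma>k^-a of the paper, with \<Sigma>perp cut or padded to N - k rows. *)
definition sketch_graph_mat :: "(nat \<Rightarrow> real) \<Rightarrow> nat \<Rightarrow> nat \<Rightarrow> nat \<Rightarrow> nat \<Rightarrow> real mat \<Rightarrow> real mat" where
  "sketch_graph_mat \<sigma> n a N k F = mat (N - k) k
     (\<lambda>(j,l). (if j + k < n then \<sigma> (Suc (j + k)) ^ a else 0) * F $$ (j,l) / \<sigma> (Suc l) ^ a)"

lemma sketch_graph_mat_carrier [simp]: "sketch_graph_mat \<sigma> n a N k F \<in> carrier_mat (N - k) k"
  and sketch_graph_mat_dim [simp]:
    "dim_row (sketch_graph_mat \<sigma> n a N k F) = N - k" "dim_col (sketch_graph_mat \<sigma> n a N k F) = k"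
  unfolding sketch_graph_mat_def by simp_all

lemma sketch_graph_mat_mult_vec:
  assumes F: "F \<in> carrier_mat (M - k) k" and "N \<le> M" and x: "x \<in> carrier_vec k"
  shows "sketch_graph_mat \<sigma> n a N k F *\<^sub>v x = vec (N - k) (\<lambda>j.
    (if j + k < n then \<sigma> (Suc (j + k)) ^ a else 0) * (F *\<^sub>v vec k (\<lambda>l. x $ l / \<sigma> (Suc l) ^ a)) $ j)"
  using assms by (intro eq_vecI)
    (auto simp: sketch_graph_mat_def scalar_prod_def sum_distrib_left atLeast0LessThan intro!: sum.cong)

lemma sketch_graph_mat_graph:
  assumes \<Phi>1: "\<Phi>1 \<in> carrier_mat k d" "mrank k \<Phi>1 = k" and \<Phi>2: "\<Phi>2 \<in> carrier_mat (M - k) d"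
    and "k \<le> n" "k \<le> N" "N \<le> M" and \<sigma>: "\<And>l. l < k \<Longrightarrow> \<sigma> (Suc l) \<noteq> 0"
    and x: "x \<in> carrier_vec k"
  shows "\<exists>z \<in> carrier_vec d. sv_power_vec \<sigma> n a N (\<Phi>1 *\<^sub>v z @\<^sub>v \<Phi>2 *\<^sub>v z)
    = x @\<^sub>v sketch_graph_mat \<sigma> n a N k (\<Phi>2 * pinv \<Phi>1) *\<^sub>v x"
proof
  define x' where "x' = vec k (\<lambda>l. x $ l / \<sigma> (Suc l) ^ a)"
  define z where "z = pinv \<Phi>1 *\<^sub>v x'"
  have pinv: "pinv \<Phi>1 \<in> carrier_mat d k" "\<Phi>1 * pinv \<Phi>1 = 1\<^sub>m k"
    using pinv_full_row_rank[OF \<Phi>1] by auto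
  have x': "x' \<in> carrier_vec k" unfolding x'_def by simp
  show z: "z \<in> carrier_vec d" unfolding z_def using pinv x' by simp
  have "\<Phi>1 *\<^sub>v z = x'"
    unfolding z_def using pinv x' \<Phi>1 by (simp flip: assoc_mult_mat_vec[of _ k d _ k])
  moreover have "\<Phi>2 *\<^sub>v z = (\<Phi>2 * pinv \<Phi>1) *\<^sub>v x'"
    unfolding z_def using pinv x' \<Phi>2 by simp
  moreover have F: "\<Phi>2 * pinv \<Phi>1 \<in> carrier_mat (M - k) k" using \<Phi>2 pinv by simp
  ultimately show "sv_power_vec \<sigma> n a N (\<Phi>1 *\<^sub>v z @\<^sub>v \<Phi>2 *\<^sub>v z)
    = x @\<^sub>v sketch_graph_mat \<sigma> n a N k (\<Phi>2 * pinv \<Phi>1) *\<^sub>v x"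
  proof (intro eq_vecI)
    fix i assume "i < dim_vec (x @\<^sub>v sketch_graph_mat \<sigma> n a N k (\<Phi>2 * pinv \<Phi>1) *\<^sub>v x)"
    hence i: "i < N" using x \<open>k \<le> N\<close> by simp
    show "sv_power_vec \<sigma> n a N (\<Phi>1 *\<^sub>v z @\<^sub>v \<Phi>2 *\<^sub>v z) $ i
      = (x @\<^sub>v sketch_graph_mat \<sigma> n a N k (\<Phi>2 * pinv \<Phi>1) *\<^sub>v x) $ i"
    proof (cases "i < k")
      case True
      thus ?thesis using i x \<sigma> \<open>k \<le> n\<close> \<open>\<Phi>1 *\<^sub>v z = x'\<close> by (simp add: sv_power_vec_def x'_def)
    next
      case False
      thus ?thesis
        using i x \<open>\<Phi>1 *\<^sub>v z = x'\<close> \<open>\<Phi>2 *\<^sub>v z = _\<close> F \<Phi>2 \<open>N \<le> M\<close> z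
        by (simp add: sv_power_vec_def sketch_graph_mat_mult_vec[OF F \<open>N \<le> M\<close> x] x'_def)
    qed
  qed (use x \<open>k \<le> N\<close> in simp)
qed

locale sv_truncation =
  fixes \<sigma> :: "nat \<Rightarrow> real" and n k :: nat
  assumes antimono: "\<And>i j. 1 \<le> i \<Longrightarrow> i \<le> j \<Longrightarrow> j \<le> n \<Longrightarrow> \<sigma> j \<le> \<sigma> i"
    and nonneg: "\<And>i. 1 \<le> i \<Longrightarrow> i \<le> n \<Longrightarrow> 0 \<le> \<sigma> i"
    and k: "0 < k" "k < n" and pos: "0 < \<sigma> k"
begin

lemma head_ge: "l < k \<Longrightarrow> \<sigma> k \<le> \<sigma> (Suc l)"
  using antimono[of "Suc l" k] k by simp

lemma tail_bounds: "k \<le> i \<Longrightarrow> i < n \<Longrightarrow> 0 \<le> \<sigma> (Suc i) \<and> \<sigma> (Suc i) \<le> \<sigma> (k + 1)"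
  using antimono[of "k + 1" "Suc i"] nonneg[of "Suc i"] by simp

lemma tail_ratio_bounds:
  assumes "j < n - k"
  shows "\<sigma> n / \<sigma> 1 \<le> \<sigma> (Suc (j + k)) / \<sigma> k" "\<sigma> (Suc (j + k)) / \<sigma> k \<le> \<sigma> (k + 1) / \<sigma> k"
proof -
  have "\<sigma> k \<le> \<sigma> 1" "\<sigma> n \<le> \<sigma> (Suc (j + k))" "0 \<le> \<sigma> n"
    using antimono[of 1 k] antimono[of "Suc (j + k)" n] nonneg[of n] k assms by auto
  thus "\<sigma> n / \<sigma> 1 \<le> \<sigma> (Suc (j + k)) / \<sigma> k"
    using pos by (intro frac_le) auto
  show "\<sigma> (Suc (j + k)) / \<sigma> k \<le> \<sigma> (k + 1) / \<sigma> k"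
    using tail_bounds[of "j + k"] assms pos by (intro divide_right_mono) auto
qed

lemma vnorm_sketch_graph_mat_le:
  assumes F: "F \<in> carrier_mat (M - k) k" and "N \<le> M" and x: "x \<in> carrier_vec k"
  shows "vnorm (sketch_graph_mat \<sigma> n a N k F *\<^sub>v x) \<le> ((\<sigma> (k + 1) / \<sigma> k) ^ a * norm2 F) * vnorm x"
proof -
  define x' where "x' = vec k (\<lambda>l. x $ l / \<sigma> (Suc l) ^ a)"
  have x': "x' \<in> carrier_vec k" unfolding x'_def by simp
  have s: "0 \<le> \<sigma> (k + 1) ^ a" and c: "0 \<le> norm2 F"
    using nonneg[of "k + 1"] k norm2_nonneg[of F] F by auto
  have "vnorm (sketch_graph_mat \<sigma> n a N k F *\<^sub>v x) \<le> \<sigma> (k + 1) ^ a * vnorm (F *\<^sub>v x')"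
    unfolding sketch_graph_mat_mult_vec[OF F \<open>N \<le> M\<close> x] x'_def[symmetric]
    using F x' \<open>N \<le> M\<close> tail_bounds k
    by (intro vnorm_scale_le[of _ "M - k"]) (auto intro!: power_mono simp: power_abs)
  moreover have "vnorm (F *\<^sub>v x') \<le> norm2 F * vnorm x'"
    using F x' by (intro norm2_mult_vec_le) simp
  moreover have "vnorm x' \<le> (1 / \<sigma> k ^ a) * vnorm x"
  proof -
    have "\<bar>1 / \<sigma> (Suc l) ^ a\<bar> \<le> 1 / \<sigma> k ^ a" if "l < k" for l
      using head_ge[OF that] pos by (simp add: frac_le power_mono)
    moreover have "x' = vec k (\<lambda>l. (1 / \<sigma> (Suc l) ^ a) * x $ l)" unfolding x'_def by auto
    moreover have "0 \<le> 1 / \<sigma> k ^ a" using pos by simp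
    ultimately show ?thesis using vnorm_scale_le[OF x order_refl] by presburger
  qed
  ultimately have "vnorm (sketch_graph_mat \<sigma> n a N k F *\<^sub>v x)
      \<le> \<sigma> (k + 1) ^ a * (norm2 F * ((1 / \<sigma> k ^ a) * vnorm x))"
    using s c by (meson mult_left_mono order_trans)
  thus ?thesis by (simp add: power_divide mult_ac)
qed

lemma vnorm_row_sketch_graph_mat_le:
  assumes F: "F \<in> carrier_mat (M - k) k" and "N \<le> M" and j: "j < N - k"
  shows "vnorm (row (sketch_graph_mat \<sigma> n a N k F) j)
    \<le> (if j + k < n then (\<sigma> (Suc (j + k)) / \<sigma> k) ^ a * norm2 F else 0)"
proof -
  define e where "e = (if j + k < n then \<sigma> (Suc (j + k)) ^ a else 0)"
  have e: "0 \<le> e" using tail_bounds[of "j + k"] unfolding e_def by auto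
  have jM: "j < M - k" using j \<open>N \<le> M\<close> by simp
  have "row (sketch_graph_mat \<sigma> n a N k F) j = vec k (\<lambda>l. (e / \<sigma> (Suc l) ^ a) * row F j $ l)"
    using F j jM by (auto simp: sketch_graph_mat_def e_def)
  also have "vnorm \<dots> \<le> e / \<sigma> k ^ a * vnorm (row F j)"
  proof (rule vnorm_scale_le)
    show "row F j \<in> carrier_vec k" using F by (metis carrier_matD(2) row_carrier)
    show "\<bar>e / \<sigma> (Suc l) ^ a\<bar> \<le> e / \<sigma> k ^ a" if "l < k" for l
      using head_ge[OF that] pos e by (simp add: divide_left_mono power_mono)
  qed (use e pos in auto)
  also have "\<dots> \<le> e / \<sigma> k ^ a * norm2 F"
    using vnorm_row_le_norm2[OF F jM] k(1) e pos by (intro mult_left_mono) auto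
  finally show ?thesis by (cases "j + k < n") (simp_all add: e_def power_divide)
qed

end

locale sketch_range = sv_truncation \<sigma> n k
  for \<sigma> :: "nat \<Rightarrow> real" and n k :: nat +
  fixes X W \<Phi>1 \<Phi>2 :: "real mat" and N M r d b :: nat
  assumes X: "X \<in> carrier_mat N r" "X\<^sup>T * X = 1\<^sub>m r"
    and W: "W \<in> carrier_mat N N" "W\<^sup>T * W = 1\<^sub>m N"
    and N: "n \<le> N" "N \<le> M"
    and \<Phi>1: "\<Phi>1 \<in> carrier_mat k d" "mrank k \<Phi>1 = k" and \<Phi>2: "\<Phi>2 \<in> carrier_mat (M - k) d"
    and range: "\<And>z. z \<in> carrier_vec d \<Longrightarrow>
      W *\<^sub>v sv_power_vec \<sigma> n (Suc b) N (\<Phi>1 *\<^sub>v z @\<^sub>v \<Phi>2 *\<^sub>v z) \<in> mat_range X"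
begin

lemma tail_gain_carrier: "\<Phi>2 * pinv \<Phi>1 \<in> carrier_mat (M - k) k"
  using pinv_full_row_rank[OF \<Phi>1] \<Phi>2 by simp

lemma tail_gain_nonneg: "0 \<le> norm2 (\<Phi>2 * pinv \<Phi>1)"
  using pinv_full_row_rank(1)[OF \<Phi>1] k by (intro norm2_nonneg) simp

lemma range_contains_graph:
  assumes x: "x \<in> carrier_vec k"
  shows "W *\<^sub>v (x @\<^sub>v sketch_graph_mat \<sigma> n (Suc b) N k (\<Phi>2 * pinv \<Phi>1) *\<^sub>v x) \<in> mat_range X"
proof -
  have kn: "k \<le> n" and kN: "k \<le> N" using k N by auto
  have "\<sigma> (Suc l) \<noteq> 0" if "l < k" for l
    using head_ge[OF that] pos by auto
  from sketch_graph_mat_graph[where \<sigma> = \<sigma> and a = "Suc b", OF \<Phi>1 \<Phi>2 kn kN N(2) this x] range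
  show ?thesis by metis
qed

lemma norm2_sin_angle_le:
  assumes s: "\<sigma> (k + 1) \<le> s"
  defines "c \<equiv> norm2 (\<Phi>2 * pinv \<Phi>1)"
  shows "norm2 (sin_angle_mat X (first_cols k W))
    \<le> (\<sigma> (k + 1) / \<sigma> k) ^ b * c * s / (\<sigma> k * sqrt (1 + (\<sigma> n / \<sigma> 1) ^ (2 * Suc b) * c^2))"
proof -
  define \<delta> where "\<delta> = \<sigma> (k + 1) / \<sigma> k"
  define \<gamma> where "\<gamma> = \<sigma> n / \<sigma> 1"
  define T where "T = \<delta> ^ Suc b * c"
  have c: "0 \<le> c" unfolding c_def by (rule tail_gain_nonneg)
  have \<gamma>: "0 \<le> \<gamma>" "\<gamma> \<le> \<delta>" "0 \<le> \<delta>"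
    using tail_ratio_bounds[of 0] nonneg[of n] nonneg[of 1] nonneg[of "k + 1"] k pos
    unfolding \<gamma>_def \<delta>_def by auto
  have "vnorm (sketch_graph_mat \<sigma> n (Suc b) N k (\<Phi>2 * pinv \<Phi>1) *\<^sub>v x) \<le> T * vnorm x"
    if "x \<in> carrier_vec k" for x
    unfolding T_def \<delta>_def c_def by (rule vnorm_sketch_graph_mat_le[OF tail_gain_carrier N(2) that])
  moreover have "0 \<le> T" using \<gamma> c unfolding T_def by simp
  ultimately have "norm2 (sin_angle_mat X (first_cols k W)) \<le> T / sqrt (1 + T^2)"
    using k N
    by (intro norm2_sin_angle_graph_le[OF X W _ _ sketch_graph_mat_carrier range_contains_graph]) auto
  also have "\<dots> = sqrt (T^2 / (1 + T^2))"
    using \<gamma> c by (simp add: T_def real_sqrt_divide)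
  also have "\<dots> \<le> sqrt ((\<delta> ^ b * c * \<delta>)^2 / (1 + (\<gamma> ^ Suc b * c)^2))"
    using \<gamma> c unfolding T_def by (intro real_sqrt_le_mono ratio_le_scaled) auto
  also have "\<dots> = \<delta> ^ b * c * \<sigma> (k + 1) / (\<sigma> k * sqrt (1 + \<gamma> ^ (2 * Suc b) * c^2))"
  proof -
    have "(\<gamma> ^ Suc b * c)^2 = \<gamma> ^ (2 * Suc b) * c^2"
      by (metis power_mult power_mult_distrib mult.commute)
    moreover have "0 \<le> \<delta> ^ b * c * \<delta>" using \<gamma> c by simp
    ultimately have "sqrt ((\<delta> ^ b * c * \<delta>)^2 / (1 + (\<gamma> ^ Suc b * c)^2))
        = \<delta> ^ b * c * \<delta> / sqrt (1 + \<gamma> ^ (2 * Suc b) * c^2)"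
      by (simp add: real_sqrt_divide)
    thus ?thesis using pos by (simp add: \<delta>_def)
  qed
  also have "\<dots> \<le> \<delta> ^ b * c * s / (\<sigma> k * sqrt (1 + \<gamma> ^ (2 * Suc b) * c^2))"
    using \<gamma> c s pos by (intro divide_right_mono mult_left_mono) auto
  finally show ?thesis unfolding \<delta>_def \<gamma>_def .
qed

lemma row_power2_le:
  assumes "j < N - k"
  defines "H \<equiv> sketch_graph_mat \<sigma> n (Suc b) N k (\<Phi>2 * pinv \<Phi>1)"
  shows "row H j \<bullet> row H j
    \<le> (if j < n - k then ((\<sigma> (Suc (j + k)) / \<sigma> k) ^ Suc b * norm2 (\<Phi>2 * pinv \<Phi>1))^2 else 0)"
proof -
  have "vnorm (row H j) \<le> (if j < n - k then (\<sigma> (Suc (j + k)) / \<sigma> k) ^ Suc b * norm2 (\<Phi>2 * pinv \<Phi>1) else 0)"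
    using vnorm_row_sketch_graph_mat_le[OF tail_gain_carrier N(2) assms(1), of "Suc b"]
    unfolding H_def by (simp add: less_diff_conv)
  thus ?thesis
    using vnorm_nonneg[of "row H j"] unfolding vnorm_power2[symmetric]
    by (auto simp: power_mono split: if_splits)
qed

lemma sum_row_ratios_le:
  defines "H \<equiv> sketch_graph_mat \<sigma> n (Suc b) N k (\<Phi>2 * pinv \<Phi>1)"
    and "c \<equiv> norm2 (\<Phi>2 * pinv \<Phi>1)"
  shows "(\<Sum>j<N - k. (row H j \<bullet> row H j) / (1 + row H j \<bullet> row H j))
    \<le> ((\<sigma> (k + 1) / \<sigma> k) ^ b * c / (\<sigma> k * sqrt (1 + (\<sigma> n / \<sigma> 1) ^ (2 * Suc b) * c^2)))^2
      * (\<Sum>j<n - k. \<sigma> (Suc (j + k))^2)"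
proof -
  define \<delta> where "\<delta> = \<sigma> (k + 1) / \<sigma> k"
  define \<gamma> where "\<gamma> = \<sigma> n / \<sigma> 1"
  define \<rho> where "\<rho> j = \<sigma> (Suc (j + k)) / \<sigma> k" for j
  have c: "0 \<le> c" unfolding c_def by (rule tail_gain_nonneg)
  have \<gamma>: "0 \<le> \<gamma>" using nonneg[of n] nonneg[of 1] k unfolding \<gamma>_def by simp
  have "(\<Sum>j<N - k. (row H j \<bullet> row H j) / (1 + row H j \<bullet> row H j))
      \<le> (\<Sum>j<N - k. if j < n - k then (\<delta> ^ b * c * \<rho> j)^2 / (1 + (\<gamma> ^ Suc b * c)^2) else 0)"
  proof (rule sum_mono)
    fix j assume "j \<in> {..<N - k}"
    hence j: "row H j \<bullet> row H j \<le> (if j < n - k then (\<rho> j ^ Suc b * c)^2 else 0)"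
      using row_power2_le unfolding H_def c_def \<rho>_def by simp
    show "row H j \<bullet> row H j / (1 + row H j \<bullet> row H j)
      \<le> (if j < n - k then (\<delta> ^ b * c * \<rho> j)^2 / (1 + (\<gamma> ^ Suc b * c)^2) else 0)"
    proof (cases "j < n - k")
      case True
      have "\<gamma> \<le> \<rho> j" "\<rho> j \<le> \<delta>"
        using tail_ratio_bounds[OF True] unfolding \<gamma>_def \<delta>_def \<rho>_def by auto
      thus ?thesis
        using True j scalar_prod_self_nonneg[of "row H j"] \<gamma> c
        by (simp only: if_True, intro ratio_le_scaled) auto
    next
      case False
      thus ?thesis using j scalar_prod_self_nonneg[of "row H j"] by simp
    qed
  qed
  also have "\<dots> = (\<delta> ^ b * c / (\<sigma> k * sqrt (1 + \<gamma> ^ (2 * Suc b) * c^2)))^2 * (\<Sum>j<n - k. \<sigma> (Suc (j + k))^2)"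
  proof -
    have "(\<gamma> ^ Suc b * c)^2 = \<gamma> ^ (2 * Suc b) * c^2"
      by (metis power_mult power_mult_distrib mult.commute)
    hence "(\<delta> ^ b * c * \<rho> j)^2 / (1 + (\<gamma> ^ Suc b * c)^2)
        = (\<delta> ^ b * c / (\<sigma> k * sqrt (1 + \<gamma> ^ (2 * Suc b) * c^2)))^2 * \<sigma> (Suc (j + k))^2" for j
      using pos c \<gamma> by (simp add: \<rho>_def power_divide power_mult_distrib add_nonneg_nonneg)
    moreover have "{..<N - k} \<inter> {..<n - k} = {..<n - k}" using N by auto
    ultimately show ?thesis
      using sum.inter_restrict[of "{..<N - k}"
          "\<lambda>j. (\<delta> ^ b * c * \<rho> j)^2 / (1 + (\<gamma> ^ Suc b * c)^2)" "{..<n - k}"]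
      by (simp add: sum_distrib_left)
  qed
  finally show ?thesis unfolding \<delta>_def \<gamma>_def .
qed

lemma normF_sin_angle_le:
  assumes s: "sqrt (\<Sum>j<n - k. \<sigma> (Suc (j + k))^2) \<le> s"
  defines "c \<equiv> norm2 (\<Phi>2 * pinv \<Phi>1)"
  shows "normF (sin_angle_mat X (first_cols k W))
    \<le> (\<sigma> (k + 1) / \<sigma> k) ^ b * c * s / (\<sigma> k * sqrt (1 + (\<sigma> n / \<sigma> 1) ^ (2 * Suc b) * c^2))"
    (is "_ \<le> ?B * s / ?D")
proof -
  have "0 \<le> sqrt (\<Sum>j<n - k. \<sigma> (Suc (j + k))^2)" by (simp add: sum_nonneg)
  hence s0: "0 \<le> s" using s by linarith
  have "(normF (sin_angle_mat X (first_cols k W)))^2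
      \<le> (\<Sum>j<N - k. let h = row (sketch_graph_mat \<sigma> n (Suc b) N k (\<Phi>2 * pinv \<Phi>1)) j in
          (h \<bullet> h) / (1 + h \<bullet> h))"
    using k N by (simp only: Let_def, intro normF_sin_angle_graph_le[OF X W _ _ range_contains_graph]) auto
  also have "\<dots> \<le> (?B / ?D)^2 * (\<Sum>j<n - k. \<sigma> (Suc (j + k))^2)"
    using sum_row_ratios_le unfolding c_def Let_def .
  also have "\<dots> \<le> (?B / ?D)^2 * s^2"
    using s s0 by (intro mult_left_mono) (auto simp flip: real_sqrt_le_iff[of _ "s^2"])
  also have "\<dots> = (?B * s / ?D)^2"
    by (simp add: power_mult_distrib power_divide)
  finally have "(normF (sin_angle_mat X (first_cols k W)))^2 \<le> (?B * s / ?D)^2" .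
  moreover have "0 \<le> ?B * s / ?D"
    using tail_gain_nonneg nonneg[of "k + 1"] nonneg[of n] nonneg[of 1] k pos s0 unfolding c_def
    by (intro divide_nonneg_nonneg mult_nonneg_nonneg real_sqrt_ge_zero add_nonneg_nonneg) auto
  ultimately show ?thesis by (rule power2_le_imp_le)
qed

end

lemma mult_mat_vec_in_mat_range: "x \<in> carrier_vec (dim_col M) \<Longrightarrow> M *\<^sub>v x \<in> mat_range M"
  unfolding mat_range_def by blast

lemma mat_range_mult_subset:
  assumes A: "A \<in> carrier_mat nr n'" and B: "B \<in> carrier_mat n' nc"
  shows "mat_range (A * B) \<subseteq> mat_range A"
proof
  fix v assume "v \<in> mat_range (A * B)"
  then obtain x where x: "x \<in> carrier_vec nc" and v: "v = (A * B) *\<^sub>v x"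
    using A B unfolding mat_range_def by auto
  have "v = A *\<^sub>v (B *\<^sub>v x)" unfolding v using A B x by simp
  thus "v \<in> mat_range A" using A B x mult_mat_vec_in_mat_range[of "B *\<^sub>v x" A] by simp
qed

lemma transpose_mult_first_rest_cols:
  assumes U: "U \<in> carrier_mat m m" and "k \<le> m" and \<Phi>: "\<Phi> \<in> carrier_mat m d" and z: "z \<in> carrier_vec d"
  shows "U\<^sup>T *\<^sub>v (\<Phi> *\<^sub>v z) = ((first_cols k U)\<^sup>T * \<Phi>) *\<^sub>v z @\<^sub>v ((rest_cols k U)\<^sup>T * \<Phi>) *\<^sub>v z"
proof -
  have "col (first_cols k U) i = col U i" if "i < k" for i
    using that U \<open>k \<le> m\<close> by (intro eq_vecI) (auto simp: first_cols_def)
  moreover have "col (rest_cols k U) (i - k) = col U i" if "k \<le> i" "i < m" for i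
    using that U by (intro eq_vecI) (auto simp: rest_cols_def)
  ultimately show ?thesis
    using U \<Phi> z \<open>k \<le> m\<close>
    by (intro eq_vecI) (auto simp: first_cols_def rest_cols_def
        assoc_mult_mat_vec[of _ k m _ d] assoc_mult_mat_vec[of _ "m - k" m _ d])
qed

context real_svd
begin

lemma Sigma_tail_norm_bounds:
  assumes "k < n"
  defines "\<Sigma>perp \<equiv> mat (m - k) (n - k) (\<lambda>(i,j). \<Sigma> $$ (i + k, j + k))"
  shows "\<sigma> (k + 1) \<le> norm2 \<Sigma>perp" and "sqrt (\<Sum>j<n - k. \<sigma> (Suc (j + k))^2) \<le> normF \<Sigma>perp"
proof -
  have \<Sigma>perp: "\<Sigma>perp \<in> carrier_mat (m - k) (n - k)"
    and diag: "\<And>j. j < n - k \<Longrightarrow> \<Sigma>perp $$ (j,j) = \<sigma> (Suc (j + k))"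
    unfolding \<Sigma>perp_def using Sigma(3) n_le_m by auto
  show "\<sigma> (k + 1) \<le> norm2 \<Sigma>perp"
    using abs_index_le_norm2[OF \<Sigma>perp, of 0 0] diag[of 0] abs_ge_self[of "\<sigma> (k + 1)"] assms n_le_m
    by simp
  show "sqrt (\<Sum>j<n - k. \<sigma> (Suc (j + k))^2) \<le> normF \<Sigma>perp"
    using diagonal_le_normF[OF \<Sigma>perp, of "n - k"] diag n_le_m by simp
qed

lemma ru_qlp_ranges:
  assumes \<Phi>: "\<Phi> \<in> carrier_mat m d"
    and Pbar: "Pbar \<in> carrier_mat n d" "mat_range Pbar = mat_range ((A\<^sup>T * A) ^\<^sub>m q * A\<^sup>T * \<Phi>)"
    and QR: "Q \<in> carrier_mat m d" "R \<in> carrier_mat d d" "A * Pbar = Q * R"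
    and Ptil: "Ptil \<in> carrier_mat d d" "orthonormal_cols Ptil"
    and z: "z \<in> carrier_vec d"
  shows "U *\<^sub>v sv_power_vec \<sigma> n (2 * q + 2) m (U\<^sup>T *\<^sub>v (\<Phi> *\<^sub>v z)) \<in> mat_range Q"
    and "V *\<^sub>v sv_power_vec \<sigma> n (2 * q + 1) n (U\<^sup>T *\<^sub>v (\<Phi> *\<^sub>v z)) \<in> mat_range (Pbar * Ptil)"
proof -
  let ?S = "(A\<^sup>T * A) ^\<^sub>m q * A\<^sup>T * \<Phi>"
  have "?S *\<^sub>v z \<in> mat_range Pbar"
    unfolding Pbar(2) using A \<Phi> z by (intro mult_mat_vec_in_mat_range) simp
  then obtain w where w: "w \<in> carrier_vec d" and Sz: "?S *\<^sub>v z = Pbar *\<^sub>v w"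
    using Pbar(1) unfolding mat_range_def by auto
  have "A *\<^sub>v (?S *\<^sub>v z) = (Q * R) *\<^sub>v w"
    unfolding Sz QR(3)[symmetric] using A Pbar(1) w by simp
  also have "\<dots> \<in> mat_range Q"
    using mat_range_mult_subset[OF QR(1,2)] mult_mat_vec_in_mat_range[of w "Q * R"] QR w by auto
  finally show "U *\<^sub>v sv_power_vec \<sigma> n (2 * q + 2) m (U\<^sup>T *\<^sub>v (\<Phi> *\<^sub>v z)) \<in> mat_range Q"
    unfolding mult_sketch_mult_vec[OF \<Phi> z] .
  have "Ptil * Ptil\<^sup>T = 1\<^sub>m d"
    using mat_mult_left_right_inverse[of "Ptil\<^sup>T" d Ptil] Ptil unfolding orthonormal_cols_def by auto
  hence "Pbar *\<^sub>v w = (Pbar * Ptil) *\<^sub>v (Ptil\<^sup>T *\<^sub>v w)"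
    using Pbar(1) Ptil(1) w by (simp add: assoc_mult_mat[of _ n d _ d _ d] flip: assoc_mult_mat_vec[of _ n d _ d])
  also have "\<dots> \<in> mat_range (Pbar * Ptil)"
    using Pbar(1) Ptil(1) w by (intro mult_mat_vec_in_mat_range) simp
  finally show "V *\<^sub>v sv_power_vec \<sigma> n (2 * q + 1) n (U\<^sup>T *\<^sub>v (\<Phi> *\<^sub>v z)) \<in> mat_range (Pbar * Ptil)"
    unfolding sketch_mult_vec[OF \<Phi> z, symmetric] Sz .
qed

end

theorem theorem3:
  fixes A \<Phi> U \<Sigma> V Pbar Q R Ptil Rtil P L :: "real mat"
    and m n k p d q :: nat
    and \<sigma> :: "nat \<Rightarrow> real"
  assumes dims: "A \<in> carrier_mat m n" "m \<ge> n"
    (* full SVD  A = U \<Sigma> V^T *)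
    and U: "U \<in> carrier_mat m m" "U\<^sup>T * U = 1\<^sub>m m" "U * U\<^sup>T = 1\<^sub>m m"
    and V: "V \<in> carrier_mat n n" "V\<^sup>T * V = 1\<^sub>m n" "V * V\<^sup>T = 1\<^sub>m n"
    and Sig: "\<Sigma> \<in> carrier_mat m n"
      "\<And>i j. i < m \<Longrightarrow> j < n \<Longrightarrow> i \<noteq> j \<Longrightarrow> \<Sigma> $$ (i,j) = 0"
      "\<And>i. i < n \<Longrightarrow> \<Sigma> $$ (i,i) = \<sigma> (Suc i)"
      "\<And>i j. 1 \<le> i \<Longrightarrow> i \<le> j \<Longrightarrow> j \<le> n \<Longrightarrow> \<sigma> j \<le> \<sigma> i"
      "\<And>i. 1 \<le> i \<Longrightarrow> i \<le> n \<Longrightarrow> 0 \<le> \<sigma> i"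
    and svd: "A = U * \<Sigma> * V\<^sup>T"
    (* parameters *)
    and k: "1 \<le> k" "\<sigma> k > 0"
    and p: "1 \<le> p" and d: "d = k + p" "d < n"
    (* RU-QLP *)
    and Phi: "\<Phi> \<in> carrier_mat m d"
    and Pbar: "Pbar \<in> carrier_mat n d" "orthonormal_cols Pbar"
      "mat_range Pbar = mat_range ((A\<^sup>T * A) ^\<^sub>m q * A\<^sup>T * \<Phi>)"
      "mrank n ((A\<^sup>T * A) ^\<^sub>m q * A\<^sup>T * \<Phi>) = d"
    and QR: "Q \<in> carrier_mat m d" "orthonormal_cols Q" "R \<in> carrier_mat d d"
      "upper_triangular R" "A * Pbar = Q * R"
    and QR2: "Ptil \<in> carrier_mat d d" "orthonormal_cols Ptil" "Rtil \<in> carrier_mat d d"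
      "upper_triangular Rtil" "R\<^sup>T = Ptil * Rtil"
    and PL: "P = Pbar * Ptil" "L = Rtil\<^sup>T"
    (* rank condition on \<Phi>_1 = U_k^T \<Phi> *)
    and rk: "mrank k ((first_cols k U)\<^sup>T * \<Phi>) = k"
  shows
    "let Uk = first_cols k U; Vk = first_cols k V;
         \<Phi>1 = Uk\<^sup>T * \<Phi>; \<Phi>2 = (rest_cols k U)\<^sup>T * \<Phi>;
         \<Sigma>perp = mat (m - k) (n - k) (\<lambda>(i,j). \<Sigma> $$ (i + k, j + k));
         c = norm2 (\<Phi>2 * pinv \<Phi>1);
         \<delta>k = \<sigma> (k + 1) / \<sigma> k; \<gamma> = \<sigma> n / \<sigma> 1
     in norm2 (sin_angle_mat Q Uk) \<le>
          \<delta>k ^ (2*q+1) * c * norm2 \<Sigma>perp / (\<sigma> k * sqrt (1 + \<gamma> ^ (4*q+4) * c\<^sup>2))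
      \<and> normF (sin_angle_mat Q Uk) \<le>
          \<delta>k ^ (2*q+1) * c * normF \<Sigma>perp / (\<sigma> k * sqrt (1 + \<gamma> ^ (4*q+4) * c\<^sup>2))
      \<and> norm2 (sin_angle_mat P Vk) \<le>
          \<delta>k ^ (2*q) * c * norm2 \<Sigma>perp / (\<sigma> k * sqrt (1 + \<gamma> ^ (4*q+2) * c\<^sup>2))
      \<and> normF (sin_angle_mat P Vk) \<le>
          \<delta>k ^ (2*q) * c * normF \<Sigma>perp / (\<sigma> k * sqrt (1 + \<gamma> ^ (4*q+2) * c\<^sup>2))"
proof -
  interpret real_svd A U \<Sigma> V \<sigma> m n
    using dims U V Sig(1-3) svd by unfold_locales auto
  interpret sv_truncation \<sigma> n k
    using Sig(4,5) k d p by unfold_locales auto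
  define \<Phi>1 where "\<Phi>1 = (first_cols k U)\<^sup>T * \<Phi>"
  define \<Phi>2 where "\<Phi>2 = (rest_cols k U)\<^sup>T * \<Phi>"
  have km: "k \<le> m" using k(1) d dims(2) by simp
  have \<Psi>: "U\<^sup>T *\<^sub>v (\<Phi> *\<^sub>v z) = \<Phi>1 *\<^sub>v z @\<^sub>v \<Phi>2 *\<^sub>v z" if "z \<in> carrier_vec d" for z
    unfolding \<Phi>1_def \<Phi>2_def by (rule transpose_mult_first_rest_cols[OF U(1) km Phi that])
  have \<Phi>12: "\<Phi>1 \<in> carrier_mat k d" "mrank k \<Phi>1 = k" "\<Phi>2 \<in> carrier_mat (m - k) d"
    unfolding \<Phi>1_def \<Phi>2_def using U(1) Phi rk by (auto intro!: mult_carrier_mat simp: rest_cols_def)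
  interpret Q: sketch_range \<sigma> n k Q U \<Phi>1 \<Phi>2 m m d d "2 * q + 1"
    using QR U \<Phi>12 dims ru_qlp_ranges(1)[OF Phi Pbar(1,3) QR(1,3,5) QR2(1,2)] \<Psi>
    by unfold_locales (auto simp: orthonormal_cols_def)
  interpret P: sketch_range \<sigma> n k P V \<Phi>1 \<Phi>2 n m d d "2 * q"
    using V \<Phi>12 dims ru_qlp_ranges(2)[OF Phi Pbar(1,3) QR(1,3,5) QR2(1,2)] \<Psi> PL(1)
      orthonormal_cols_mult[OF Pbar(1,2) QR2(1,2)] Pbar(1) QR2(1)
    by unfold_locales (auto simp: orthonormal_cols_def)
  have "2 * Suc (2 * q + 1) = 4 * q + 4" "2 * Suc (2 * q) = 4 * q + 2" by simp_all
  moreover have "k < n" using d p by simp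
  ultimately show ?thesis
    using Sigma_tail_norm_bounds Q.norm2_sin_angle_le Q.normF_sin_angle_le
      P.norm2_sin_angle_le P.normF_sin_angle_le
    unfolding Let_def \<Phi>1_def \<Phi>2_def by metis
qed

end
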